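(* For all $(a,b,c)\in\mathbb{C}^3$: (1) the sequence $\bigl(\{\cdot,\cdot\}^{[a,b,c]}_n\bigr)_{n\ge 0}$ is a formal deformation of $\widetilde J$; (2) $\{\widetilde J_{k,p},\widetilde J_{\ell,q}\}^{[a,b,c]}_n\subset \widetilde J_{k+\ell+2n,\,p+q}$ for all $k,\ell\in 2\mathbb{Z}$, $p,q\in\mathbb{Z}_{\ge0}$, $n\in\mathbb{Z}_{\ge0}$; (3) the subalgebra $\mathcal M_*$ is stable under every $\{\cdot,\cdot\}^{[a,b,c]}_n$, and for $f,g\in\mathcal M_*$ one has $\{f,g\}^{[a,b,c]}_n=\mathrm{SRC}_n(f,g)$ for all $n$.
   Context: Let $\widetilde J=\mathbb{C}[E_4,E_6,A,B]$ be the polynomial algebra in four algebraically independent variables, bigraded by weight and index, where $E_4$ has weight $4$ and index $0$, $E_6$ has weight $6$ and index $0$, $A$ has weight $-2$ and index $1$, $B$ has weight $0$ and index $1$; $\widetilde J_{k,p}$ denotes the homogeneous component of weight $k$ and index $p$ (elements of some $\widetilde J_{k,p}$ are called homogeneous). (This is the algebra of weak Jacobi forms of even weight on $\mathrm{SL}(2,\mathbb{Z})$, with $E_4,E_6$ the Eisenstein series and $A,B$ the standard generators of weight $-2$ and $0$ and index 1.) Let $\mathcal M_*=\mathbb{C}[E_4,E_6]$ (the index-$0$ part, the algebra of modular forms), with $\mathcal M_k$ its weight-$k$ part. The Serre derivation $S$ of $\mathcal M_*$ is the derivation with $S(E_4)=-\tfrac13E_6$, $S(E_6)=-\tfrac12E_4^2$.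 The Serre–Rankin–Cohen brackets are $\mathrm{SRC}_n(f,g)=\sum_{i=0}^n(-1)^i\binom{k+n-1}{n-i}\binom{\ell+n-1}{i}S^i(f)S^{n-i}(g)$ for $f\in\mathcal M_k,g\in\mathcal M_\ell$, extended bilinearly. For $(a,b)\in\mathbb{C}^2$, $S_{a,b}$ is the derivation of $\widetilde J$ with $S_{a,b}(E_4)=-\tfrac13E_6$, $S_{a,b}(E_6)=-\tfrac12E_4^2$, $S_{a,b}(A)=aB$, $S_{a,b}(B)=bE_4A$. For $c\in\mathbb{C}$ and $n\ge0$, $\{\cdot,\cdot\}^{[a,b,c]}_n$ is the bilinear map $\widetilde J\times\widetilde J\to\widetilde J$ defined on homogeneous $f\in\widetilde J_{k,p}$, $g\in\widetilde J_{\ell,q}$ by $\{f,g\}^{[a,b,c]}_n=\sum_{r=0}^n(-1)^r\binom{k+cp+n-1}{n-r}\binom{\ell+cq+n-1}{r}S_{a,b}^r(f)\,S_{a,b}^{n-r}(g)$, where $\binom{x}{m}=x(x-1)\cdots(x-m+1)/m!$ for complex $x$. A formal deformation of a commutative $\mathbb{C}$-algebra $R$ is a sequence $(\mu_j)_{j\ge0}$ of bilinear maps $R\times R\to R$ with $\mu_0$ the product of $R$ such that for all $n\ge0$ and $f,g,h\in R$: $\sum_{r=0}^n\mu_{n-r}(\mu_r(f,g),h)=\sum_{r=0}^n\mu_{n-r}(f,\mu_r(g,h))$ (i.e. $f\star g=\sum_j\mu_j(f,g)\hbar^j$ is an associative product on $R[[\hbar]]$). *)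

theory Defs
  imports Complex_Main "HOL-Library.Poly_Mapping" "HOL-Library.Product_Plus"
begin

text \<open>Exponent vectors (i,j,k,l) stand for the monomial E4^i E6^j A^k B^l.
  The algebra J~ = C[E4,E6,A,B] is the type of finitely supported maps from
  exponent vectors to complex coefficients with convolution product.\<close>

type_synonym mono = "nat \<times> nat \<times> nat \<times> nat"
type_synonym jac = "mono \<Rightarrow>\<^sub>0 complex"

definition cst :: "complex \<Rightarrow> jac" where
  "cst z = Poly_Mapping.single (0,0,0,0) z"

definition E4 :: jac where "E4 = Poly_Mapping.single (1,0,0,0) 1"
definition E6 :: jac where "E6 = Poly_Mapping.single (0,1,0,0) 1"
definition Aj :: jac where "Aj = Poly_Mapping.single (0,0,1,0) 1"
definition Bj :: jac where "Bj = Poly_Mapping.single (0,0,0,1) 1"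

fun wt :: "mono \<Rightarrow> int" where
  "wt (i,j,k,l) = 4 * int i + 6 * int j - 2 * int k"
fun idx :: "mono \<Rightarrow> nat" where
  "idx (i,j,k,l) = k + l"

definition Jhom :: "int \<Rightarrow> nat \<Rightarrow> jac set" where
  "Jhom k p = {f. \<forall>m\<in>Poly_Mapping.keys f. wt m = k \<and> idx m = p}"

definition Mstar :: "jac set" where
  "Mstar = {f. \<forall>m\<in>Poly_Mapping.keys f. (case m of (i,j,k,l) \<Rightarrow> k = 0 \<and> l = 0)}"

definition pdE4 :: "jac \<Rightarrow> jac" where
  "pdE4 f = (\<Sum>m\<in>Poly_Mapping.keys f. case m of (i,j,k,l) \<Rightarrow>
      Poly_Mapping.single (i - 1, j, k, l) (of_nat i * Poly_Mapping.lookup f m))"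
definition pdE6 :: "jac \<Rightarrow> jac" where
  "pdE6 f = (\<Sum>m\<in>Poly_Mapping.keys f. case m of (i,j,k,l) \<Rightarrow>
      Poly_Mapping.single (i, j - 1, k, l) (of_nat j * Poly_Mapping.lookup f m))"
definition pdA :: "jac \<Rightarrow> jac" where
  "pdA f = (\<Sum>m\<in>Poly_Mapping.keys f. case m of (i,j,k,l) \<Rightarrow>
      Poly_Mapping.single (i, j, k - 1, l) (of_nat k * Poly_Mapping.lookup f m))"
definition pdB :: "jac \<Rightarrow> jac" where
  "pdB f = (\<Sum>m\<in>Poly_Mapping.keys f. case m of (i,j,k,l) \<Rightarrow>
      Poly_Mapping.single (i, j, k, l - 1) (of_nat l * Poly_Mapping.lookup f m))"

text \<open>The derivation S_{a,b}: the unique derivation with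
  E4 -> -E6/3, E6 -> -E4^2/2, A -> aB, B -> b E4 A (chain rule form).\<close>
definition Sab :: "complex \<Rightarrow> complex \<Rightarrow> jac \<Rightarrow> jac" where
  "Sab a b f = cst (-1/3) * E6 * pdE4 f + cst (-1/2) * E4^2 * pdE6 f
              + cst a * Bj * pdA f + cst b * E4 * Aj * pdB f"

definition serre :: "jac \<Rightarrow> jac" where
  "serre f = cst (-1/3) * E6 * pdE4 f + cst (-1/2) * E4^2 * pdE6 f"

definition comp :: "jac \<Rightarrow> int \<Rightarrow> nat \<Rightarrow> jac" where
  "comp f k p = (\<Sum>m\<in>{m\<in>Poly_Mapping.keys f. wt m = k \<and> idx m = p}. Poly_Mapping.single m (Poly_Mapping.lookup f m))"

definition degs :: "jac \<Rightarrow> (int \<times> nat) set" where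
  "degs f = (\<lambda>m. (wt m, idx m)) ` Poly_Mapping.keys f"

definition bhom :: "complex \<Rightarrow> complex \<Rightarrow> complex \<Rightarrow> nat \<Rightarrow>
    int \<Rightarrow> nat \<Rightarrow> jac \<Rightarrow> int \<Rightarrow> nat \<Rightarrow> jac \<Rightarrow> jac" where
  "bhom a b c n k p f l q g =
     (\<Sum>r=0..n. cst ((-1)^r
        * ((of_int k + c * of_nat p + of_nat n - 1) gchoose (n - r))
        * ((of_int l + c * of_nat q + of_nat n - 1) gchoose r))
        * ((Sab a b ^^ r) f * (Sab a b ^^ (n - r)) g))"

definition bracket :: "complex \<Rightarrow> complex \<Rightarrow> complex \<Rightarrow> nat \<Rightarrow> jac \<Rightarrow> jac \<Rightarrow> jac" where
  "bracket a b c n f g =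
     (\<Sum>(k,p)\<in>degs f. \<Sum>(l,q)\<in>degs g. bhom a b c n k p (comp f k p) l q (comp g l q))"

definition src_hom :: "nat \<Rightarrow> int \<Rightarrow> jac \<Rightarrow> int \<Rightarrow> jac \<Rightarrow> jac" where
  "src_hom n k f l g =
     (\<Sum>i=0..n. cst ((-1)^i
        * ((of_int k + of_nat n - 1) gchoose (n - i))
        * ((of_int l + of_nat n - 1) gchoose i))
        * ((serre ^^ i) f * (serre ^^ (n - i)) g))"

definition wts :: "jac \<Rightarrow> int set" where
  "wts f = wt ` Poly_Mapping.keys f"

definition wcomp :: "jac \<Rightarrow> int \<Rightarrow> jac" where
  "wcomp f k = (\<Sum>m\<in>{m\<in>Poly_Mapping.keys f. wt m = k}. Poly_Mapping.single m (Poly_Mapping.lookup f m))"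

definition SRC :: "nat \<Rightarrow> jac \<Rightarrow> jac \<Rightarrow> jac" where
  "SRC n f g = (\<Sum>k\<in>wts f. \<Sum>l\<in>wts g. src_hom n k (wcomp f k) l (wcomp g l))"

definition formal_deformation :: "(nat \<Rightarrow> jac \<Rightarrow> jac \<Rightarrow> jac) \<Rightarrow> bool" where
  "formal_deformation \<mu> \<longleftrightarrow>
     (\<forall>f g. \<mu> 0 f g = f * g) \<and>
     (\<forall>n f g h. (\<Sum>r=0..n. \<mu> (n - r) (\<mu> r f g) h) = (\<Sum>r=0..n. \<mu> (n - r) f (\<mu> r g h)))"

end

theory Submission
  imports Defs "HOL-Computational_Algebra.Polynomial"
begin

text \<open>All three parts reduce to properties of the brackets
  \<open>RC\<^sub>n(x, f, y, g) = \<Sum>\<^sub>r (-1)\<^sup>r C(x+n-1, n-r) C(y+n-1, r) D\<^sup>r f D\<^sup>n\<^sup>-\<^sup>r g\<close>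
  of an arbitrary derivation \<open>D\<close> of a commutative \<open>\<complex>\<close>-algebra with arbitrary complex weights:
  on homogeneous arguments \<open>{f, g}\<^sub>n\<close> is \<open>RC\<^sub>n\<close> for \<open>D = S\<^sub>a\<^sub>,\<^sub>b\<close> with weights \<open>k + cp\<close>, \<open>l + cq\<close>,
  and \<open>S\<^sub>a\<^sub>,\<^sub>b\<close> raises the weight by 2, preserves the index and restricts to the Serre derivation
  on \<open>M\<^sub>*\<close>. The deformation identity then reduces to
  \<open>\<Sum>\<^sub>r RC\<^sub>n\<^sub>-\<^sub>r(x+y+2r, RC\<^sub>r(x,f,y,g), z, h) = \<Sum>\<^sub>r RC\<^sub>n\<^sub>-\<^sub>r(x, f, y+z+2r, RC\<^sub>r(y,g,z,h))\<close>.

  To prove it, adjoin a variable \<open>X\<close>, let \<open>DX = D + d/dX\<close> and \<open>Q\<^sub>d = d - X DX\<close>. The operators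
  \<open>DX\<close> and \<open>Q\<close> applied to the \<open>j\<close>-th factor of a product are encoded by commuting symbols
  \<open>S\<^sub>j\<close>, \<open>T\<^sub>j\<close>; the symbol \<open>P\<^sub>i\<^sub>j\<^sup>k\<close> with \<open>P\<^sub>i\<^sub>j = S\<^sub>i T\<^sub>j - T\<^sub>i S\<^sub>j\<close> evaluates to a polynomial that is
  constant in \<open>X\<close> and equals \<open>k! RC\<^sub>k\<close> with negated weights. Both sides of the associativity
  identity are then evaluations of \<open>(P\<^sub>1\<^sub>2 + P\<^sub>1\<^sub>3 + P\<^sub>2\<^sub>3)\<^sup>n\<close>, expanded binomially in two ways.\<close>

lemma sum_pascal:
  fixes F :: "nat \<Rightarrow> 'b::comm_semiring_1"
  shows "(\<Sum>b\<le>n. of_nat (n choose b) * F (Suc b)) + (\<Sum>b\<le>n. of_nat (n choose b) * F b)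
       = (\<Sum>b\<le>Suc n. of_nat (Suc n choose b) * F b)"
proof -
  have e1: "(\<Sum>b\<le>Suc n. of_nat (Suc n choose b) * F b)
      = F 0 + (\<Sum>b\<le>n. of_nat (Suc n choose Suc b) * F (Suc b))"
    by (subst sum.atMost_Suc_shift) simp
  have e2: "(\<Sum>b\<le>n. of_nat (n choose b) * F b) = (\<Sum>b\<le>Suc n. of_nat (n choose b) * F b)"
    by (simp add: binomial_eq_0)
  have e3: "(\<Sum>b\<le>Suc n. of_nat (n choose b) * F b) = F 0 + (\<Sum>b\<le>n. of_nat (n choose Suc b) * F (Suc b))"
    by (subst sum.atMost_Suc_shift) simp
  show ?thesis unfolding e1 e2 e3
    by (simp add: sum.distrib algebra_simps)
qed

lemma sum_alternating_telescope:
  fixes G :: "nat \<Rightarrow> 'b::comm_ring_1"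
  shows "(\<Sum>i\<le>k. (-1)^i * of_nat (k choose i) * (of_nat (k - i) * G (Suc i)))
       + (\<Sum>i\<le>k. (-1)^i * of_nat (k choose i) * (of_nat i * G i)) = 0"
proof -
  define H where "H j = (-1)^j * of_nat (j * (k choose j)) * G j" for j
  have first: "(\<Sum>i\<le>k. (-1)^i * of_nat (k choose i) * (of_nat (k - i) * G (Suc i))) = - (\<Sum>i\<le>k. H (Suc i))"
    unfolding H_def sum_negf[symmetric]
  proof (rule sum.cong[OF refl])
    fix i
    have "(of_nat (k - i) * of_nat (k choose i) :: 'b) = of_nat (Suc i * (k choose Suc i))"
      by (metis binomial_absorb_comp binomial_absorption of_nat_mult)
    then show "(-1)^i * of_nat (k choose i) * (of_nat (k - i) * G (Suc i))
      = - ((-1) ^ Suc i * of_nat (Suc i * (k choose Suc i)) * G (Suc i))"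
      by (simp only: power_Suc flip: \<open>_ = of_nat (Suc i * _)\<close>) (simp add: algebra_simps)
  qed
  have second: "(\<Sum>i\<le>k. (-1)^i * of_nat (k choose i) * (of_nat i * G i)) = (\<Sum>i\<le>k. H i)"
    unfolding H_def by (rule sum.cong) (simp_all add: algebra_simps)
  have "(\<Sum>i\<le>k. H i) + H (Suc k) = H 0 + (\<Sum>i\<le>k. H (Suc i))"
    by (metis sum.atMost_Suc sum.atMost_Suc_shift)
  moreover have "H 0 = 0" "H (Suc k) = 0"
    by (simp_all add: H_def binomial_eq_0)
  ultimately show ?thesis unfolding first second by simp
qed

lemma prod_neg_falling_eq_gchoose:
  fixes a :: complex
  shows "(\<Prod>t=0..<i. - a - of_nat t) = fact i * (-1)^i * ((a + of_nat i - 1) gchoose i)"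
  using gbinomial_mult_fact[of i "-a"] by (simp add: gbinomial_minus mult.assoc)

lemma sign_choose_falling_products:
  fixes x y :: complex
  assumes "i \<le> k"
  shows "(-1)^i * of_nat (k choose i) * (\<Prod>t=0..<i. - x - of_nat (k - i) - of_nat t)
      * (\<Prod>t=0..<k - i. - y - of_nat i - of_nat t)
    = fact k * ((-1)^(k - i) * ((x + of_nat k - 1) gchoose i) * ((y + of_nat k - 1) gchoose (k - i)))"
proof -
  have px: "(\<Prod>t=0..<i. - x - of_nat (k - i) - of_nat t) = fact i * (-1)^i * ((x + of_nat k - 1) gchoose i)"
    using prod_neg_falling_eq_gchoose[where i=i and a="x + of_nat (k - i)"] assms by (simp add: of_nat_diff algebra_simps)
  have py: "(\<Prod>t=0..<k - i. - y - of_nat i - of_nat t)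
      = fact (k - i) * (-1)^(k - i) * ((y + of_nat k - 1) gchoose (k - i))"
    using prod_neg_falling_eq_gchoose[where i="k - i" and a="y + of_nat i"] assms by (simp add: of_nat_diff algebra_simps)
  have fk: "(of_nat (k choose i) * fact i * fact (k - i) :: complex) = fact k"
    using arg_cong[OF binomial_fact_lemma[OF assms], of "of_nat :: nat \<Rightarrow> complex"]
    by (simp add: ac_simps)
  have "(-1)^i * of_nat (k choose i) * (\<Prod>t=0..<i. - x - of_nat (k - i) - of_nat t)
      * (\<Prod>t=0..<k - i. - y - of_nat i - of_nat t)
    = ((-1)^i * (-1)^i) * (of_nat (k choose i) * fact i * fact (k - i))
      * ((-1)^(k - i) * ((x + of_nat k - 1) gchoose i) * ((y + of_nat k - 1) gchoose (k - i)))"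
    unfolding px py by (simp only: ac_simps)
  then show ?thesis
    unfolding fk by (simp flip: power_mult_distrib)
qed

lemma of_nat_choose_fact_mult:
  assumes "m \<le> n"
  shows "(of_nat (n choose m) * (of_nat (fact (n - m)) * (of_nat (fact m) * u)) :: 'a::comm_semiring_1)
    = of_nat (fact n) * u"
proof -
  have "(of_nat (n choose m) * of_nat (fact (n - m)) * of_nat (fact m) :: 'a) = of_nat (fact n)"
    using arg_cong[OF binomial_fact_lemma[OF assms], of "of_nat :: nat \<Rightarrow> 'a"] by (simp add: ac_simps)
  then show ?thesis
    by (simp add: mult.assoc[symmetric])
qed

lemma additive_of_nat_mult:
  fixes f :: "'a::ring_1 \<Rightarrow> 'b::ring_1"
  assumes "additive f"
  shows "f (of_nat k * x) = of_nat k * f x"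
  by (induction k) (simp_all add: additive.add[OF assms] additive.zero[OF assms] algebra_simps)

lemma smult_sum_right: "smult a (sum f S) = (\<Sum>i\<in>S. smult a (f i))"
  by (induction S rule: infinite_finite_induct) (auto simp: smult_add_right)

lemma poly_mapping_single_expansion:
  "f = (\<Sum>m\<in>Poly_Mapping.keys f. Poly_Mapping.single m (Poly_Mapping.lookup f m))"
  by (rule poly_mapping_eqI) (simp add: lookup_sum lookup_single when_def in_keys_iff sum.delta' cong: if_cong)

fun weighted_iter :: "(complex \<Rightarrow> 'b \<Rightarrow> 'b) \<Rightarrow> complex \<Rightarrow> nat \<Rightarrow> 'b \<Rightarrow> 'b" where
  "weighted_iter E d 0 p = p"
| "weighted_iter E d (Suc n) p = E (d - of_nat n) (weighted_iter E d n p)"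

lemma weighted_iter_const: "weighted_iter (\<lambda>_. E) d n p = (E ^^ n) p"
  by (induction n) auto

lemma weighted_iter_Leibniz:
  fixes E :: "complex \<Rightarrow> 'b::comm_ring_1 \<Rightarrow> 'b"
  assumes add: "\<And>x. additive (E x)"
    and Leibniz: "\<And>d e p q. E (d + e) (p * q) = E d p * q + p * E e q"
  shows "weighted_iter E (d + e) n (p * q)
    = (\<Sum>b\<le>n. of_nat (n choose b) * (weighted_iter E d b p * weighted_iter E e (n - b) q))"
proof (induction n)
  case 0
  then show ?case by simp
next
  case (Suc n)
  let ?W = "weighted_iter E"
  have "?W (d + e) (Suc n) (p * q)
      = (\<Sum>b\<le>n. of_nat (n choose b) * E (d + e - of_nat n) (?W d b p * ?W e (n - b) q))"
    by (simp add: Suc.IH additive.sum[OF add] additive_of_nat_mult[OF add])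
  also have "\<dots> = (\<Sum>b\<le>n. of_nat (n choose b) * (?W d (Suc b) p * ?W e (Suc n - Suc b) q)
          + of_nat (n choose b) * (?W d b p * ?W e (Suc n - b) q))"
  proof (rule sum.cong[OF refl])
    fix b assume "b \<in> {..n}"
    then have "d + e - of_nat n = (d - of_nat b) + (e - of_nat (n - b))" and "Suc n - b = Suc (n - b)"
      by (simp_all add: of_nat_diff)
    then show "of_nat (n choose b) * E (d + e - of_nat n) (?W d b p * ?W e (n - b) q) =
      of_nat (n choose b) * (?W d (Suc b) p * ?W e (Suc n - Suc b) q)
          + of_nat (n choose b) * (?W d b p * ?W e (Suc n - b) q)"
      by (simp only: Leibniz) (simp add: algebra_simps)
  qed
  also have "\<dots> = (\<Sum>b\<le>Suc n. of_nat (Suc n choose b) * (?W d b p * ?W e (Suc n - b) q))"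
    using sum_pascal[of n "\<lambda>b. ?W d b p * ?W e (Suc n - b) q"] by (simp add: sum.distrib)
  finally show ?case .
qed

text \<open>The library's \<open>pderiv\<close> requires a ring without zero divisors; the coefficient rings
  used below need not be one.\<close>

definition fderiv :: "'a::comm_ring_1 poly \<Rightarrow> 'a poly" where
  "fderiv p = (\<Sum>i\<le>degree p. monom (of_nat (Suc i) * coeff p (Suc i)) i)"

lemma coeff_fderiv: "coeff (fderiv p) n = of_nat (Suc n) * coeff p (Suc n)"
proof -
  have "coeff (fderiv p) n = (\<Sum>i\<le>degree p. if i = n then of_nat (Suc i) * coeff p (Suc i) else 0)"
    unfolding fderiv_def by (simp add: coeff_sum coeff_monom)
  also have "\<dots> = of_nat (Suc n) * coeff p (Suc n)"
    by (auto simp: sum.delta coeff_eq_0)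
  finally show ?thesis .
qed

global_interpretation fderiv: additive fderiv
  by unfold_locales (rule poly_eqI, simp add: coeff_fderiv algebra_simps)

lemma fderiv_smult: "fderiv (smult a p) = smult a (fderiv p)"
  by (rule poly_eqI) (simp add: coeff_fderiv algebra_simps)

lemma fderiv_pCons: "fderiv (pCons a p) = p + pCons 0 (fderiv p)"
  by (rule poly_eqI) (simp add: coeff_fderiv coeff_pCons algebra_simps split: nat.split)

lemma fderiv_mult: "fderiv (p * q) = p * fderiv q + q * fderiv p"
  by (induct p) (auto simp: fderiv.add fderiv.zero fderiv_smult fderiv_pCons algebra_simps)

lemma fderiv_const [simp]: "fderiv [:a:] = 0"
  by (simp add: fderiv_pCons fderiv.zero)

section \<open>Rankin--Cohen brackets of a derivation\<close>

locale scalar_derivation =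
  fixes sc :: "complex \<Rightarrow> 'a::comm_ring_1" and D :: "'a \<Rightarrow> 'a"
  assumes sc_add: "sc (x + y) = sc x + sc y"
    and sc_mult: "sc (x * y) = sc x * sc y"
    and sc_one: "sc 1 = 1"
    and D_add: "D (f + g) = D f + D g"
    and D_mult: "D (f * g) = D f * g + f * D g"
    and D_sc: "D (sc c) = 0"
begin

sublocale sc: additive sc
  by unfold_locales (rule sc_add)

declare sc.zero [simp]

lemma sc_of_nat [simp]: "sc (of_nat n) = of_nat n"
  by (induction n) (simp_all add: sc_add sc_one)

lemma sc_power: "sc (x ^ n) = sc x ^ n"
  by (induction n) (simp_all add: sc_mult sc_one)

lemma sc_sign_of_nat: "sc ((-1) ^ i * of_nat k) = (-1) ^ i * of_nat k"
  by (simp add: sc_mult sc_power sc.minus sc_one)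

lemma sc_fact_mult: "sc (fact k * z) = of_nat (fact k) * sc z"
  using sc_of_nat[of "fact k"] by (simp add: sc_mult)

lemma sc_mult_cancel:
  assumes "x \<noteq> 0" "sc x * u = sc x * v"
  shows "u = v"
proof -
  have "sc (1 / x) * sc x = 1"
    using assms(1) by (simp add: sc_one flip: sc_mult)
  then show ?thesis
    by (metis assms(2) mult.assoc mult_1)
qed

sublocale D: additive D
  by unfold_locales (rule D_add)

declare D.zero [simp]

lemma D_one [simp]: "D 1 = 0"
  using D_sc[of 1] by (simp add: sc_one)

lemma D_sc_mult: "D (sc c * f) = sc c * D f"
  by (simp add: D_mult D_sc)

sublocale Dpow: additive "D ^^ r" for r
  by unfold_locales (induction r, simp_all add: D.add)

lemma Dpow_sc_mult: "(D ^^ r) (sc c * f) = sc c * (D ^^ r) f"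
  by (induction r) (simp_all add: D_sc_mult)

definition RC :: "nat \<Rightarrow> complex \<Rightarrow> 'a \<Rightarrow> complex \<Rightarrow> 'a \<Rightarrow> 'a" where
  "RC n x f y g = (\<Sum>r=0..n. sc ((-1)^r * ((x + of_nat n - 1) gchoose (n - r))
        * ((y + of_nat n - 1) gchoose r)) * ((D ^^ r) f * (D ^^ (n - r)) g))"

sublocale RC_left: additive "\<lambda>f. RC n x f y g" for n x y g
  by unfold_locales (simp add: RC_def Dpow.add algebra_simps sum.distrib)

sublocale RC_right: additive "RC n x f y" for n x f y
  by unfold_locales (simp add: RC_def Dpow.add algebra_simps sum.distrib)

lemma RC_of_nat_left: "RC n x (of_nat k * f) y g = of_nat k * RC n x f y g"
  using Dpow_sc_mult[of _ "of_nat k"] by (simp add: RC_def sum_distrib_left ac_simps)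

lemma RC_of_nat_right: "RC n x f y (of_nat k * g) = of_nat k * RC n x f y g"
  using Dpow_sc_mult[of _ "of_nat k"] by (simp add: RC_def sum_distrib_left ac_simps)

definition DX :: "'a poly \<Rightarrow> 'a poly" where
  "DX p = map_poly D p + fderiv p"

lemma coeff_DX: "coeff (DX p) n = D (coeff p n) + of_nat (Suc n) * coeff p (Suc n)"
  by (simp add: DX_def coeff_map_poly coeff_fderiv)

sublocale DX: additive DX
  by unfold_locales (rule poly_eqI, simp add: coeff_DX D.add algebra_simps)

lemma DX_mult: "DX (p * q) = DX p * q + p * DX q"
proof -
  have "map_poly D (p * q) = map_poly D p * q + p * map_poly D q"
    by (rule poly_eqI) (simp add: coeff_map_poly coeff_mult D.sum D_mult sum.distrib)
  then show ?thesis
    by (simp add: DX_def fderiv_mult algebra_simps)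
qed

lemma DX_const [simp]: "DX [:f:] = [:D f:]"
  by (rule poly_eqI) (simp add: coeff_DX coeff_pCons split: nat.split)

lemma DX_X [simp]: "DX [:0, 1:] = 1"
  by (rule poly_eqI) (simp add: coeff_DX coeff_pCons split: nat.split)

lemma DX_fderiv: "DX (fderiv p) = fderiv (DX p)"
  by (intro poly_eqI)
     (simp add: coeff_DX coeff_fderiv additive_of_nat_mult[OF D.additive_axioms] algebra_simps del: of_nat_Suc)

lemma DX_pCons_0 [simp]: "DX (pCons 0 q) = q + pCons 0 (DX q)"
  using DX_mult[of "[:0, 1:]" q] by simp

lemma DX_sc_smult: "DX (smult (sc c) p) = smult (sc c) (DX p)"
  using DX_mult[of "[:sc c:]" p] by (simp add: D_sc)

sublocale DXpow: additive "DX ^^ a" for a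
  by unfold_locales (induction a, simp_all add: DX.add)

lemma DXpow_const: "(DX ^^ a) [:f:] = [:(D ^^ a) f:]"
  by (induction a) auto

lemma DXpow_fderiv: "(DX ^^ a) (fderiv p) = fderiv ((DX ^^ a) p)"
  by (induction a) (auto simp: DX_fderiv)

lemma DXpow_sc_smult: "(DX ^^ a) (smult (sc c) p) = smult (sc c) ((DX ^^ a) p)"
  by (induction a) (auto simp: DX_sc_smult)

lemma DXpow_Leibniz:
  "(DX ^^ n) (p * q) = (\<Sum>b\<le>n. of_nat (n choose b) * ((DX ^^ b) p * (DX ^^ (n - b)) q))"
  using weighted_iter_Leibniz[of "\<lambda>_. DX" 0 0 n p q]
  by (simp add: weighted_iter_const DX.additive_axioms DX_mult)

definition Qop :: "complex \<Rightarrow> 'a poly \<Rightarrow> 'a poly" where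
  "Qop d p = smult (sc d) p - [:0, 1:] * DX p"

sublocale Qop: additive "Qop d" for d
  by unfold_locales (simp add: Qop_def DX.add smult_add_right algebra_simps)

lemma Qop_mult: "Qop (d + e) (p * q) = Qop d p * q + p * Qop e q"
  by (simp add: Qop_def DX_mult sc_add smult_add_left algebra_simps)

lemma Qop_sc_smult: "Qop d (smult (sc c) p) = smult (sc c) (Qop d p)"
  by (simp add: Qop_def DX_sc_smult smult_diff_right mult.commute)

lemma DX_Qop: "DX (Qop d p) = Qop (d - 1) (DX p)"
  by (simp add: Qop_def DX_mult DX.diff DX_sc_smult sc.diff sc_one smult_diff_left algebra_simps)

lemma fderiv_Qop: "fderiv (Qop d p) = Qop d (fderiv p) - DX p"
proof -
  have "fderiv ([:0, 1:] * DX p) = [:0, 1:] * DX (fderiv p) + DX p"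
    by (simp add: fderiv_pCons DX_fderiv)
  then show ?thesis
    by (simp add: Qop_def fderiv.diff fderiv_smult fderiv_pCons)
qed

lemma poly_Qop_0: "poly (Qop d p) 0 = sc d * poly p 0"
  by (simp add: Qop_def)

abbreviation Qpow :: "complex \<Rightarrow> nat \<Rightarrow> 'a poly \<Rightarrow> 'a poly" where
  "Qpow \<equiv> weighted_iter Qop"

sublocale Qpow: additive "Qpow d b" for d b
  by unfold_locales (induction b, simp_all add: Qop.add)

lemma Qpow_sc_smult: "Qpow d b (smult (sc c) p) = smult (sc c) (Qpow d b p)"
  by (induction b) (auto simp: Qop_sc_smult)

lemma DX_Qpow: "DX (Qpow d b p) = Qpow (d - 1) b (DX p)"
  by (induction b) (auto simp: DX_Qop algebra_simps)

lemma DXpow_Qpow: "(DX ^^ a) (Qpow d b p) = Qpow (d - of_nat a) b ((DX ^^ a) p)"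
  by (induction a) (auto simp: DX_Qpow algebra_simps)

lemma Qpow_Qpow: "Qpow (d - of_nat b') b (Qpow d b' p) = Qpow d (b + b') p"
  by (induction b) (auto simp: algebra_simps)

lemma Qpow_Leibniz:
  "Qpow (d + e) n (p * q) = (\<Sum>b\<le>n. of_nat (n choose b) * (Qpow d b p * Qpow e (n - b) q))"
  by (rule weighted_iter_Leibniz) (auto simp: Qop.additive_axioms Qop_mult)

lemma fderiv_Qpow: "fderiv (Qpow d b p) = Qpow d b (fderiv p) - of_nat b * Qpow (d - 1) (b - 1) (DX p)"
proof (induction b)
  case 0
  then show ?case by simp
next
  case (Suc b)
  have "fderiv (Qpow d (Suc b) p) = Qpow d (Suc b) (fderiv p)
      - of_nat b * Qop (d - of_nat b) (Qpow (d - 1) (b - 1) (DX p)) - Qpow (d - 1) b (DX p)"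
    by (simp add: fderiv_Qop DX_Qpow Suc.IH Qop.diff additive_of_nat_mult[OF Qop.additive_axioms])
  moreover have "of_nat b * Qop (d - of_nat b) (Qpow (d - 1) (b - 1) (DX p)) = of_nat b * Qpow (d - 1) b (DX p)"
    by (cases b) (simp_all add: algebra_simps)
  ultimately show ?case
    by (simp add: algebra_simps)
qed

lemma poly_Qpow_0: "poly (Qpow d b p) 0 = sc (\<Prod>i=0..<b. d - of_nat i) * poly p 0"
  by (induction b) (simp_all add: sc_one poly_Qop_0 sc_mult)

text \<open>An element \<open>p\<close> is treated as having weight \<open>d\<close>; \<open>DQ d a b p\<close> has weight \<open>d - a - b\<close>.\<close>
definition DQ :: "complex \<Rightarrow> nat \<Rightarrow> nat \<Rightarrow> 'a poly \<Rightarrow> 'a poly" where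
  "DQ d a b p = Qpow (d - of_nat a) b ((DX ^^ a) p)"

sublocale DQ: additive "DQ d a b" for d a b
  by unfold_locales (simp add: DQ_def DXpow.add Qpow.add)

lemma DQ_sc_smult: "DQ d a b (smult (sc c) p) = smult (sc c) (DQ d a b p)"
  by (simp add: DQ_def DXpow_sc_smult Qpow_sc_smult)

lemma DQ_DQ: "DQ (d - of_nat a' - of_nat b') a b (DQ d a' b' p) = DQ d (a + a') (b + b') p"
proof -
  have "DQ (d - of_nat a' - of_nat b') a b (DQ d a' b' p)
      = Qpow (d - of_nat a' - of_nat a - of_nat b') b (Qpow (d - of_nat a' - of_nat a) b' ((DX ^^ a) ((DX ^^ a') p)))"
    by (simp add: DQ_def DXpow_Qpow algebra_simps)
  also have "\<dots> = DQ d (a + a') (b + b') p"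
    using Qpow_Qpow[of "d - of_nat a' - of_nat a" b' b] by (simp add: DQ_def funpow_add algebra_simps)
  finally show ?thesis .
qed

lemma DQ_Leibniz:
  "DQ (d + e) A B (p * q) = (\<Sum>a\<le>A. \<Sum>b\<le>B. of_nat (A choose a) * of_nat (B choose b)
      * (DQ d a b p * DQ e (A - a) (B - b) q))"
proof -
  have "DQ (d + e) A B (p * q) = (\<Sum>a\<le>A. of_nat (A choose a) *
      Qpow (d + e - of_nat A) B ((DX ^^ a) p * (DX ^^ (A - a)) q))"
    by (simp add: DQ_def DXpow_Leibniz Qpow.sum additive_of_nat_mult[OF Qpow.additive_axioms])
  also have "\<dots> = (\<Sum>a\<le>A. \<Sum>b\<le>B. of_nat (A choose a) * of_nat (B choose b)
      * (DQ d a b p * DQ e (A - a) (B - b) q))"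
  proof (rule sum.cong[OF refl])
    fix a assume "a \<in> {..A}"
    then have "d + e - of_nat A = (d - of_nat a) + (e - of_nat (A - a))"
      by (simp add: of_nat_diff)
    then show "of_nat (A choose a) * Qpow (d + e - of_nat A) B ((DX ^^ a) p * (DX ^^ (A - a)) q)
      = (\<Sum>b\<le>B. of_nat (A choose a) * of_nat (B choose b) * (DQ d a b p * DQ e (A - a) (B - b) q))"
      by (simp only: Qpow_Leibniz DQ_def sum_distrib_left mult.assoc)
  qed
  finally show ?thesis .
qed

lemma fderiv_DQ: "fderiv (DQ d a b p) = DQ d a b (fderiv p) - of_nat b * DQ d (Suc a) (b - 1) p"
  by (simp add: DQ_def fderiv_Qpow DXpow_fderiv algebra_simps flip: funpow.simps(2)[unfolded o_def])

lemma poly_DQ_const_0: "poly (DQ d a b [:f:]) 0 = sc (\<Prod>i=0..<b. d - of_nat a - of_nat i) * (D ^^ a) f"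
  by (simp add: DQ_def poly_Qpow_0 DXpow_const)

text \<open>The Rankin--Cohen combination over \<open>'a[X]\<close>, in which \<open>DX\<close> and \<open>Qop\<close> play the roles of
  the two commuting operations \<open>S\<close> and \<open>T\<close> of the symbol \<open>S\<^sub>1 T\<^sub>2 - T\<^sub>1 S\<^sub>2\<close>.\<close>

definition RC_poly :: "nat \<Rightarrow> complex \<Rightarrow> 'a poly \<Rightarrow> complex \<Rightarrow> 'a poly \<Rightarrow> 'a poly" where
  "RC_poly k d p e q = (\<Sum>i\<le>k. (-1)^i * of_nat (k choose i) * (DQ d (k - i) i p * DQ e i (k - i) q))"

lemma RC_poly_sc_smult_left: "RC_poly k d (smult (sc c) p) e q = smult (sc c) (RC_poly k d p e q)"
  by (simp add: RC_poly_def DQ_sc_smult smult_sum_right algebra_simps)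

lemma RC_poly_sc_smult_right: "RC_poly k d p e (smult (sc c) q) = smult (sc c) (RC_poly k d p e q)"
  by (simp add: RC_poly_def DQ_sc_smult smult_sum_right algebra_simps)

lemma fderiv_RC_poly_const: "fderiv (RC_poly k d [:f:] e [:g:]) = 0"
proof -
  define G where "G j = DQ d (Suc (k - j)) (j - 1) [:f:] * DQ e j (k - j) [:g:]" for j
  have sign: "fderiv ((-1)^i * of_nat m * p) = (-1)^i * of_nat m * fderiv (p :: 'a poly)" for i m p
  proof -
    have "((-1)^i * of_nat m :: 'a poly) = [:(-1)^i * of_nat m:]"
      by (induction i) (simp_all add: of_nat_poly)
    then show ?thesis by (simp add: fderiv_mult fderiv_smult)
  qed
  have "fderiv (RC_poly k d [:f:] e [:g:]) = - ((\<Sum>i\<le>k. (-1)^i * of_nat (k choose i) * (of_nat (k - i) * G (Suc i)))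
       + (\<Sum>i\<le>k. (-1)^i * of_nat (k choose i) * (of_nat i * G i)))"
    unfolding RC_poly_def fderiv.sum sign sum.distrib[symmetric] sum_negf[symmetric]
  proof (rule sum.cong[OF refl])
    fix i assume "i \<in> {..k}"
    then have "of_nat (k - i) * G (Suc i) = of_nat (k - i) * (DQ d (k - i) i [:f:] * DQ e (Suc i) (k - Suc i) [:g:])"
      by (cases "i = k") (simp_all add: G_def Suc_diff_Suc)
    moreover have "G i = DQ d (Suc (k - i)) (i - 1) [:f:] * DQ e i (k - i) [:g:]"
      by (simp add: G_def)
    ultimately show "(-1)^i * of_nat (k choose i) * fderiv (DQ d (k - i) i [:f:] * DQ e i (k - i) [:g:]) =
      - ((-1)^i * of_nat (k choose i) * (of_nat (k - i) * G (Suc i))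
       + (-1)^i * of_nat (k choose i) * (of_nat i * G i))"
      by (simp add: fderiv_mult fderiv_DQ DQ.zero algebra_simps)
  qed
  also have "\<dots> = 0"
    using sum_alternating_telescope[of k G] by simp
  finally show ?thesis .
qed

lemma fderiv_eq_0_imp_const:
  fixes p :: "'a poly"
  assumes "fderiv p = 0"
  shows "p = [:coeff p 0:]"
proof (rule poly_eqI)
  fix n
  show "coeff p n = coeff [:coeff p 0:] n"
  proof (cases n)
    case (Suc m)
    have "sc (of_nat (Suc m)) * coeff p (Suc m) = sc (of_nat (Suc m)) * 0"
      using assms by (metis coeff_0 coeff_fderiv mult_zero_right sc_of_nat)
    then have "coeff p (Suc m) = 0"
      by (rule sc_mult_cancel[rotated]) (rule of_nat_neq_0)
    then show ?thesis
      using Suc by simp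
  qed simp
qed

lemma RC_reindex:
  "RC k x f y g = (\<Sum>i\<le>k. sc ((-1)^(k - i) * ((x + of_nat k - 1) gchoose i)
        * ((y + of_nat k - 1) gchoose (k - i))) * ((D ^^ (k - i)) f * (D ^^ i) g))"
  unfolding RC_def atLeast0AtMost[symmetric]
  by (subst sum.atLeastAtMost_rev) (rule sum.cong, auto)

text \<open>The \<open>X\<close>-derivative of \<open>RC_poly\<close> telescopes away, and at \<open>X = 0\<close> each \<open>Qop d\<close> acts
  as multiplication by \<open>d\<close>, which produces the binomial coefficients of \<open>RC\<close>.\<close>

lemma RC_poly_const: "RC_poly k (-x) [:f:] (-y) [:g:] = [:of_nat (fact k) * RC k x f y g:]"
proof -
  have "coeff (RC_poly k (-x) [:f:] (-y) [:g:]) 0 = poly (RC_poly k (-x) [:f:] (-y) [:g:]) 0"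
    by (simp add: poly_0_coeff_0)
  also have "\<dots> = (\<Sum>i\<le>k. sc ((-1)^i * of_nat (k choose i) * (\<Prod>t=0..<i. - x - of_nat (k - i) - of_nat t)
      * (\<Prod>t=0..<k - i. - y - of_nat i - of_nat t)) * ((D ^^ (k - i)) f * (D ^^ i) g))"
    by (simp add: RC_poly_def poly_sum poly_DQ_const_0 sc_mult sc_power sc.minus sc_one ac_simps)
  also have "\<dots> = of_nat (fact k) * RC k x f y g"
    unfolding RC_reindex sum_distrib_left
  proof (rule sum.cong[OF refl])
    fix i assume "i \<in> {..k}"
    then have ik: "i \<le> k" by simp
    have "sc ((-1)^i * of_nat (k choose i) * (\<Prod>t=0..<i. - x - of_nat (k - i) - of_nat t)
        * (\<Prod>t=0..<k - i. - y - of_nat i - of_nat t))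
      = of_nat (fact k) * sc ((-1)^(k - i) * ((x + of_nat k - 1) gchoose i) * ((y + of_nat k - 1) gchoose (k - i)))"
      by (simp only: sign_choose_falling_products[OF ik] sc_fact_mult)
    then show "sc ((-1)^i * of_nat (k choose i) * (\<Prod>t=0..<i. - x - of_nat (k - i) - of_nat t)
        * (\<Prod>t=0..<k - i. - y - of_nat i - of_nat t)) * ((D ^^ (k - i)) f * (D ^^ i) g)
      = of_nat (fact k) * (sc ((-1)^(k - i) * ((x + of_nat k - 1) gchoose i)
        * ((y + of_nat k - 1) gchoose (k - i))) * ((D ^^ (k - i)) f * (D ^^ i) g))"
      by (simp only: mult.assoc)
  qed
  finally show ?thesis
    using fderiv_eq_0_imp_const[OF fderiv_RC_poly_const] by metis
qed

end

section \<open>Associativity of Rankin--Cohen brackets\<close>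

text \<open>Symbols are polynomials in commuting variables \<open>S\<^sub>j\<close>, \<open>T\<^sub>j\<close> (\<open>j = 1, 2, 3\<close>), the exponents of
  \<open>S\<^sub>j\<close> and \<open>T\<^sub>j\<close> being the \<open>j\<close>-th pair of \<open>exps3\<close>.\<close>

type_synonym exps3 = "(nat \<times> nat) \<times> (nat \<times> nat) \<times> (nat \<times> nat)"
type_synonym symbol = "exps3 \<Rightarrow>\<^sub>0 complex"

definition smono :: "nat \<Rightarrow> nat \<Rightarrow> nat \<Rightarrow> nat \<Rightarrow> nat \<Rightarrow> nat \<Rightarrow> complex \<Rightarrow> symbol" where
  "smono a1 b1 a2 b2 a3 b3 c = Poly_Mapping.single ((a1,b1),(a2,b2),(a3,b3)) c"

lemma smono_mult: "smono a1 b1 a2 b2 a3 b3 c * smono a1' b1' a2' b2' a3' b3' c'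
   = smono (a1+a1') (b1+b1') (a2+a2') (b2+b2') (a3+a3') (b3+b3') (c*c')"
  by (simp add: smono_def mult_single)

lemma smono_one: "smono 0 0 0 0 0 0 1 = 1"
  by (simp add: smono_def flip: zero_prod_def)

lemma smono_power: "smono a1 b1 a2 b2 a3 b3 c ^ n = smono (n*a1) (n*b1) (n*a2) (n*b2) (n*a3) (n*b3) (c ^ n)"
  by (induction n) (simp_all add: smono_mult smono_one)

lemma of_nat_smono: "(of_nat k :: symbol) = smono 0 0 0 0 0 0 (of_nat k)"
  by (simp add: smono_def of_nat_single zero_prod_def)

lemma uminus_smono: "- smono a1 b1 a2 b2 a3 b3 c = smono a1 b1 a2 b2 a3 b3 (- c)"
  by (simp add: smono_def single_uminus)

lemma power_smono_add:
  "(smono a1 b1 a2 b2 a3 b3 c + smono a1' b1' a2' b2' a3' b3' c') ^ n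
   = (\<Sum>i\<le>n. smono (i*a1 + (n-i)*a1') (i*b1 + (n-i)*b1') (i*a2 + (n-i)*a2') (i*b2 + (n-i)*b2')
        (i*a3 + (n-i)*a3') (i*b3 + (n-i)*b3') (of_nat (n choose i) * c^i * c'^(n-i)))"
  by (simp add: binomial_ring smono_power of_nat_smono smono_mult)

abbreviation "S1 \<equiv> smono 1 0 0 0 0 0 1"
abbreviation "T1 \<equiv> smono 0 1 0 0 0 0 1"
abbreviation "S2 \<equiv> smono 0 0 1 0 0 0 1"
abbreviation "T2 \<equiv> smono 0 0 0 1 0 0 1"
abbreviation "S3 \<equiv> smono 0 0 0 0 1 0 1"
abbreviation "T3 \<equiv> smono 0 0 0 0 0 1 1"

definition P12 :: symbol where "P12 = S1 * T2 - T1 * S2"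
definition P13 :: symbol where "P13 = S1 * T3 - T1 * S3"
definition P23 :: symbol where "P23 = S2 * T3 - T2 * S3"

lemma smono_split: "smono (a1 + a1') (b1 + b1') (a2 + a2') (b2 + b2') (a3 + a3') (b3 + b3') (c * c') =
   smono a1 b1 a2 b2 a3 b3 c * smono a1' b1' a2' b2' a3' b3' c'"
  by (simp add: smono_mult)

lemma power_S1_S2: "(S1 + S2) ^ A = (\<Sum>a\<le>A. smono a 0 (A - a) 0 0 0 (of_nat (A choose a)))"
  unfolding power_smono_add by (rule sum.cong) simp_all

lemma power_T1_T2: "(T1 + T2) ^ Bq = (\<Sum>b\<le>Bq. smono 0 b 0 (Bq - b) 0 0 (of_nat (Bq choose b)))"
  unfolding power_smono_add by (rule sum.cong) simp_all

lemma power_S2_S3: "(S2 + S3) ^ A = (\<Sum>a\<le>A. smono 0 0 a 0 (A - a) 0 (of_nat (A choose a)))"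
  unfolding power_smono_add by (rule sum.cong) simp_all

lemma power_T2_T3: "(T2 + T3) ^ Bq = (\<Sum>b\<le>Bq. smono 0 0 0 b 0 (Bq - b) (of_nat (Bq choose b)))"
  unfolding power_smono_add by (rule sum.cong) simp_all

lemma power_P13_P23: "(P13 + P23) ^ K = (\<Sum>j\<le>K. smono 0 0 0 0 0 0 ((-1)^j * of_nat (K choose j)) *
      ((S1 + S2) ^ (K - j) * (T1 + T2) ^ j * smono 0 0 0 0 j (K - j) 1))"
proof -
  have eq: "P13 + P23 = (T1 + T2) * smono 0 0 0 0 1 0 (-1) + (S1 + S2) * T3"
    unfolding P13_def P23_def by (simp add: algebra_simps uminus_smono[symmetric])
  have "(P13 + P23) ^ K = ((T1 + T2) * smono 0 0 0 0 1 0 (-1) + (S1 + S2) * T3) ^ K"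
    by (simp only: eq)
  also have "\<dots> = (\<Sum>j\<le>K. of_nat (K choose j) * ((T1 + T2) * smono 0 0 0 0 1 0 (-1)) ^ j * ((S1 + S2) * T3) ^ (K - j))"
    by (rule binomial_ring)
  also have "\<dots> = (\<Sum>j\<le>K. smono 0 0 0 0 0 0 ((-1)^j * of_nat (K choose j)) *
      ((S1 + S2) ^ (K - j) * (T1 + T2) ^ j * smono 0 0 0 0 j (K - j) 1))"
  proof (intro sum.cong refl)
    fix j
    have f1: "smono 0 0 0 0 0 0 ((-1)^j * of_nat (K choose j)) = smono 0 0 0 0 0 0 ((-1)^j) * of_nat (K choose j)"
      using smono_split[of 0 0 0 0 0 0 0 0 0 0 0 0 "(-1)^j" "of_nat (K choose j)"] by (simp add: of_nat_smono)
    have f2: "smono 0 0 0 0 j (K - j) 1 = smono 0 0 0 0 j 0 1 * smono 0 0 0 0 0 (K - j) 1"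
      using smono_split[of 0 0 0 0 0 0 0 0 j 0 0 "K - j" 1 1] by simp
    have f3: "smono 0 0 0 0 1 0 (-1) ^ j = smono 0 0 0 0 0 0 ((-1)^j) * smono 0 0 0 0 j 0 1"
      using smono_split[of 0 0 0 0 0 0 0 0 0 j 0 0 "(-1)^j" 1] by (simp add: smono_power)
    have f4: "T3 ^ (K - j) = smono 0 0 0 0 0 (K - j) 1"
      by (simp add: smono_power)
    show "of_nat (K choose j) * ((T1 + T2) * smono 0 0 0 0 1 0 (-1)) ^ j * ((S1 + S2) * T3) ^ (K - j) =
      smono 0 0 0 0 0 0 ((-1)^j * of_nat (K choose j)) * ((S1 + S2) ^ (K - j) * (T1 + T2) ^ j * smono 0 0 0 0 j (K - j) 1)"
      by (simp only: power_mult_distrib f1 f2 f3 f4) (simp only: mult.assoc mult.commute mult.left_commute)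
  qed
  finally show ?thesis .
qed

lemma power_P12_P13: "(P12 + P13) ^ K = (\<Sum>j\<le>K. smono 0 0 0 0 0 0 ((-1)^j * of_nat (K choose j)) *
      (smono (K - j) j 0 0 0 0 1 * (S2 + S3) ^ j * (T2 + T3) ^ (K - j)))"
proof -
  have eq: "P12 + P13 = (S2 + S3) * smono 0 1 0 0 0 0 (-1) + (T2 + T3) * S1"
    unfolding P12_def P13_def by (simp add: algebra_simps uminus_smono[symmetric])
  have "(P12 + P13) ^ K = ((S2 + S3) * smono 0 1 0 0 0 0 (-1) + (T2 + T3) * S1) ^ K"
    by (simp only: eq)
  also have "\<dots> = (\<Sum>j\<le>K. of_nat (K choose j) * ((S2 + S3) * smono 0 1 0 0 0 0 (-1)) ^ j * ((T2 + T3) * S1) ^ (K - j))"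
    by (rule binomial_ring)
  also have "\<dots> = (\<Sum>j\<le>K. smono 0 0 0 0 0 0 ((-1)^j * of_nat (K choose j)) *
      (smono (K - j) j 0 0 0 0 1 * (S2 + S3) ^ j * (T2 + T3) ^ (K - j)))"
  proof (intro sum.cong refl)
    fix j
    have f1: "smono 0 0 0 0 0 0 ((-1)^j * of_nat (K choose j)) = smono 0 0 0 0 0 0 ((-1)^j) * of_nat (K choose j)"
      using smono_split[of 0 0 0 0 0 0 0 0 0 0 0 0 "(-1)^j" "of_nat (K choose j)"] by (simp add: of_nat_smono)
    have f2: "smono (K - j) j 0 0 0 0 1 = smono 0 j 0 0 0 0 1 * smono (K - j) 0 0 0 0 0 1"
      using smono_split[of 0 "K - j" j 0 0 0 0 0 0 0 0 0 1 1] by simp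
    have f3: "smono 0 1 0 0 0 0 (-1) ^ j = smono 0 0 0 0 0 0 ((-1)^j) * smono 0 j 0 0 0 0 1"
      using smono_split[of 0 0 0 j 0 0 0 0 0 0 0 0 "(-1)^j" 1] by (simp add: smono_power)
    have f4: "S1 ^ (K - j) = smono (K - j) 0 0 0 0 0 1"
      by (simp add: smono_power)
    show "of_nat (K choose j) * ((S2 + S3) * smono 0 1 0 0 0 0 (-1)) ^ j * ((T2 + T3) * S1) ^ (K - j) =
      smono 0 0 0 0 0 0 ((-1)^j * of_nat (K choose j)) * (smono (K - j) j 0 0 0 0 1 * (S2 + S3) ^ j * (T2 + T3) ^ (K - j))"
      by (simp only: power_mult_distrib f1 f2 f3 f4) (simp only: mult.assoc mult.commute mult.left_commute)
  qed
  finally show ?thesis .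
qed

lemma power_P12: "P12 ^ m = (\<Sum>i\<le>m. smono (m - i) i i (m - i) 0 0 ((-1)^i * of_nat (m choose i)))"
proof -
  have eq: "P12 = smono 0 1 1 0 0 0 (-1) + smono 1 0 0 1 0 0 1"
    unfolding P12_def by (simp add: smono_mult uminus_smono[symmetric])
  show ?thesis unfolding eq power_smono_add by (intro sum.cong refl) (simp add: ac_simps)
qed

lemma power_P23: "P23 ^ m = (\<Sum>i\<le>m. smono 0 0 (m - i) i i (m - i) ((-1)^i * of_nat (m choose i)))"
proof -
  have eq: "P23 = smono 0 0 0 1 1 0 (-1) + smono 0 0 1 0 0 1 1"
    unfolding P23_def by (simp add: smono_mult uminus_smono[symmetric])
  show ?thesis unfolding eq power_smono_add by (intro sum.cong refl) (simp add: ac_simps)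
qed

lemma keys_power_P12: "\<forall>k\<in>Poly_Mapping.keys (P12 ^ m). \<exists>a1 b1 a2 b2. k = ((a1,b1),(a2,b2),(0,0)) \<and> a1 + b1 + a2 + b2 = 2 * m"
proof
  fix k assume "k \<in> Poly_Mapping.keys (P12 ^ m)"
  then have "k \<in> (\<Union>i\<le>m. Poly_Mapping.keys (smono (m - i) i i (m - i) 0 0 ((-1)^i * of_nat (m choose i))))"
    unfolding power_P12 by (rule subsetD[OF keys_sum])
  then obtain i where "i \<le> m" "k = ((m - i, i), (i, m - i), (0, 0))"
    by (auto simp: smono_def split: if_splits)
  then show "\<exists>a1 b1 a2 b2. k = ((a1,b1),(a2,b2),(0,0)) \<and> a1 + b1 + a2 + b2 = 2 * m"
    by auto
qed

lemma keys_power_P23: "\<forall>k\<in>Poly_Mapping.keys (P23 ^ m). \<exists>a2 b2 a3 b3. k = ((0,0),(a2,b2),(a3,b3)) \<and> a2 + b2 + a3 + b3 = 2 * m"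
proof
  fix k assume "k \<in> Poly_Mapping.keys (P23 ^ m)"
  then have "k \<in> (\<Union>i\<le>m. Poly_Mapping.keys (smono 0 0 (m - i) i i (m - i) ((-1)^i * of_nat (m choose i))))"
    unfolding power_P23 by (rule subsetD[OF keys_sum])
  then obtain i where "i \<le> m" "k = ((0, 0), (m - i, i), (i, m - i))"
    by (auto simp: smono_def split: if_splits)
  then show "\<exists>a2 b2 a3 b3. k = ((0,0),(a2,b2),(a3,b3)) \<and> a2 + b2 + a3 + b3 = 2 * m"
    by auto
qed

lemma symbol_expand: "Q = (\<Sum>k\<in>Poly_Mapping.keys Q. smono 0 0 0 0 0 0 (Poly_Mapping.lookup Q k) * Poly_Mapping.single k 1)"
proof -
  have e: "smono 0 0 0 0 0 0 c * Poly_Mapping.single k 1 = Poly_Mapping.single k c" for c k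
    by (simp add: smono_def mult_single flip: zero_prod_def)
  show ?thesis
    unfolding e by (rule poly_mapping_single_expansion)
qed

context scalar_derivation
begin

definition eval_sym :: "(exps3 \<Rightarrow> 'a poly) \<Rightarrow> symbol \<Rightarrow> 'a poly" where
  "eval_sym T Q = (\<Sum>m\<in>Poly_Mapping.keys Q. smult (sc (Poly_Mapping.lookup Q m)) (T m))"

lemma eval_sym_superset:
  assumes "finite S" "Poly_Mapping.keys Q \<subseteq> S"
  shows "eval_sym T Q = (\<Sum>m\<in>S. smult (sc (Poly_Mapping.lookup Q m)) (T m))"
  unfolding eval_sym_def
  by (rule sum.mono_neutral_left[OF assms(1) assms(2)]) (auto simp: in_keys_iff)

sublocale eval_sym: additive "eval_sym T" for T
proof
  fix Q1 Q2 :: symbol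
  let ?S = "Poly_Mapping.keys Q1 \<union> Poly_Mapping.keys Q2"
  have "eval_sym T (Q1 + Q2) = (\<Sum>m\<in>?S. smult (sc (Poly_Mapping.lookup (Q1 + Q2) m)) (T m))"
    using keys_add[of Q1 Q2] by (intro eval_sym_superset) auto
  also have "\<dots> = (\<Sum>m\<in>?S. smult (sc (Poly_Mapping.lookup Q1 m)) (T m))
      + (\<Sum>m\<in>?S. smult (sc (Poly_Mapping.lookup Q2 m)) (T m))"
    by (simp add: lookup_add sc_add smult_add_left sum.distrib)
  also have "\<dots> = eval_sym T Q1 + eval_sym T Q2"
    by (subst (1 2) eval_sym_superset[where S="?S"]) auto
  finally show "eval_sym T (Q1 + Q2) = eval_sym T Q1 + eval_sym T Q2" .
qed

lemma eval_sym_smono: "eval_sym T (smono a1 b1 a2 b2 a3 b3 c) = smult (sc c) (T ((a1,b1),(a2,b2),(a3,b3)))"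
  by (cases "c = 0") (simp_all add: eval_sym_def smono_def)

lemma eval_sym_const_mult: "eval_sym T (smono 0 0 0 0 0 0 c * Q) = smult (sc c) (eval_sym T Q)"
proof -
  have l: "Poly_Mapping.lookup (smono 0 0 0 0 0 0 c * Q) m = c * Poly_Mapping.lookup Q m" for m
    using mult_map_scale_conv_mult[of c Q, symmetric] by (simp add: smono_def zero_prod_def[symmetric] Poly_Mapping.map.rep_eq when_def)
  have "Poly_Mapping.keys (smono 0 0 0 0 0 0 c * Q) \<subseteq> Poly_Mapping.keys Q"
    by (auto simp: in_keys_iff l)
  then have "eval_sym T (smono 0 0 0 0 0 0 c * Q) = (\<Sum>m\<in>Poly_Mapping.keys Q. smult (sc (c * Poly_Mapping.lookup Q m)) (T m))"
    by (subst eval_sym_superset[where S="Poly_Mapping.keys Q"]) (auto simp: l)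
  also have "\<dots> = smult (sc c) (eval_sym T Q)"
    by (simp add: eval_sym_def smult_sum_right sc_mult)
  finally show ?thesis .
qed

lemma smult_sc_of_nat: "smult (sc (of_nat k)) p = of_nat k * p"
  by (simp add: of_nat_poly)

text \<open>\<open>S\<^sub>j\<^sup>a T\<^sub>j\<^sup>b\<close> is evaluated as \<open>DQ _ a b\<close> on the \<open>j\<close>-th factor.\<close>
definition ev3 :: "complex \<Rightarrow> complex \<Rightarrow> complex \<Rightarrow> 'a poly \<Rightarrow> 'a poly \<Rightarrow> 'a poly \<Rightarrow> exps3 \<Rightarrow> 'a poly" where
  "ev3 d e f p q r m = (case m of ((a1,b1),(a2,b2),(a3,b3)) \<Rightarrow> DQ d a1 b1 p * DQ e a2 b2 q * DQ f a3 b3 r)"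

definition ev12 :: "complex \<Rightarrow> complex \<Rightarrow> 'a poly \<Rightarrow> 'a poly \<Rightarrow> exps3 \<Rightarrow> 'a poly" where
  "ev12 d e p q m = (case m of ((a1,b1),(a2,b2),_) \<Rightarrow> DQ d a1 b1 p * DQ e a2 b2 q)"

definition ev23 :: "complex \<Rightarrow> complex \<Rightarrow> 'a poly \<Rightarrow> 'a poly \<Rightarrow> exps3 \<Rightarrow> 'a poly" where
  "ev23 e f q r m = (case m of (_,(a2,b2),(a3,b3)) \<Rightarrow> DQ e a2 b2 q * DQ f a3 b3 r)"

text \<open>By \<open>DQ_Leibniz\<close>, \<open>S\<^sub>1 + S\<^sub>2\<close> and \<open>T\<^sub>1 + T\<^sub>2\<close> act as \<open>DX\<close> and \<open>Qop\<close> on the product of the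
  first two factors.\<close>

lemma eval_sym_Leibniz12:
  "eval_sym (ev3 d e f p q r) (smono a1 b1 a2 b2 0 0 1 * (S1 + S2) ^ A
      * (T1 + T2) ^ Bq * smono 0 0 0 0 j l 1)
   = DQ (d + e - of_nat (a1 + b1 + a2 + b2)) A Bq (ev12 d e p q ((a1,b1),(a2,b2),(0,0))) * DQ f j l r"
proof -
  have "smono a1 b1 a2 b2 0 0 1 * (S1 + S2) ^ A
      * (T1 + T2) ^ Bq * smono 0 0 0 0 j l 1
    = (\<Sum>a\<le>A. \<Sum>b\<le>Bq. smono (a1 + a) (b1 + b) (a2 + (A - a)) (b2 + (Bq - b)) j l
          (of_nat (A choose a) * of_nat (Bq choose b)))"
    unfolding power_S1_S2 power_T1_T2 sum_distrib_left sum_distrib_right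
    by (simp add: smono_mult, rule sum.swap)
  then have "eval_sym (ev3 d e f p q r) (smono a1 b1 a2 b2 0 0 1 * (S1 + S2) ^ A
      * (T1 + T2) ^ Bq * smono 0 0 0 0 j l 1)
    = (\<Sum>a\<le>A. \<Sum>b\<le>Bq. of_nat (A choose a) * of_nat (Bq choose b) *
        (DQ d (a + a1) (b + b1) p * DQ e (A - a + a2) (Bq - b + b2) q * DQ f j l r))"
    by (simp add: eval_sym.sum eval_sym_smono ev3_def sc_mult smult_sc_of_nat[symmetric] ac_simps)
  also have "\<dots> = DQ (d + e - of_nat (a1 + b1 + a2 + b2)) A Bq (ev12 d e p q ((a1,b1),(a2,b2),(0,0))) * DQ f j l r"
  proof -
    have de: "d + e - of_nat (a1 + b1 + a2 + b2) = (d - of_nat a1 - of_nat b1) + (e - of_nat a2 - of_nat b2)"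
      by simp
    show ?thesis
      unfolding ev12_def de by (simp add: DQ_Leibniz DQ_DQ sum_distrib_right sum_distrib_left ac_simps)
  qed
  finally show ?thesis .
qed

lemma eval_sym_Leibniz23:
  "eval_sym (ev3 d e f p q r) (smono 0 0 a2 b2 a3 b3 1 * smono i j 0 0 0 0 1 * (S2 + S3) ^ A
      * (T2 + T3) ^ Bq)
   = DQ d i j p * DQ (e + f - of_nat (a2 + b2 + a3 + b3)) A Bq (ev23 e f q r ((0,0),(a2,b2),(a3,b3)))"
proof -
  have "smono 0 0 a2 b2 a3 b3 1 * smono i j 0 0 0 0 1 * (S2 + S3) ^ A
      * (T2 + T3) ^ Bq
    = (\<Sum>a\<le>A. \<Sum>b\<le>Bq. smono i j (a2 + a) (b2 + b) (a3 + (A - a)) (b3 + (Bq - b))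
          (of_nat (A choose a) * of_nat (Bq choose b)))"
    unfolding power_S2_S3 power_T2_T3 sum_distrib_left sum_distrib_right
    by (simp add: smono_mult, rule sum.swap)
  then have "eval_sym (ev3 d e f p q r) (smono 0 0 a2 b2 a3 b3 1 * smono i j 0 0 0 0 1 * (S2 + S3) ^ A
      * (T2 + T3) ^ Bq)
    = (\<Sum>a\<le>A. \<Sum>b\<le>Bq. of_nat (A choose a) * of_nat (Bq choose b) *
        (DQ d i j p * DQ e (a + a2) (b + b2) q * DQ f (A - a + a3) (Bq - b + b3) r))"
    by (simp add: eval_sym.sum eval_sym_smono ev3_def sc_mult smult_sc_of_nat[symmetric] ac_simps)
  also have "\<dots> = DQ d i j p * DQ (e + f - of_nat (a2 + b2 + a3 + b3)) A Bq (ev23 e f q r ((0,0),(a2,b2),(a3,b3)))"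
  proof -
    have de: "e + f - of_nat (a2 + b2 + a3 + b3) = (e - of_nat a2 - of_nat b2) + (f - of_nat a3 - of_nat b3)"
      by simp
    show ?thesis
      unfolding ev23_def de by (simp add: DQ_Leibniz DQ_DQ sum_distrib_right sum_distrib_left ac_simps)
  qed
  finally show ?thesis .
qed

lemma eval_sym_mult_expand: "eval_sym T (Q * X) = (\<Sum>k\<in>Poly_Mapping.keys Q. smult (sc (Poly_Mapping.lookup Q k)) (eval_sym T (Poly_Mapping.single k 1 * X)))"
proof -
  have "eval_sym T (Q * X) = eval_sym T ((\<Sum>k\<in>Poly_Mapping.keys Q. smono 0 0 0 0 0 0 (Poly_Mapping.lookup Q k) * Poly_Mapping.single k 1) * X)"
    by (subst symbol_expand[of Q]) (rule refl)
  also have "\<dots> = (\<Sum>k\<in>Poly_Mapping.keys Q. smult (sc (Poly_Mapping.lookup Q k)) (eval_sym T (Poly_Mapping.single k 1 * X)))"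
    by (simp add: sum_distrib_right eval_sym.sum mult.assoc eval_sym_const_mult)
  finally show ?thesis .
qed

lemma smult_sc_sign_of_nat: "smult (sc ((-1)^j * of_nat c)) p = (-1)^j * of_nat c * p"
proof -
  have "((-1)^j * of_nat c :: 'a poly) = [:(-1)^j * of_nat c:]"
    by (induction j) (simp_all add: of_nat_poly)
  then show ?thesis by (simp add: sc_sign_of_nat)
qed

sublocale RC_poly_left: additive "\<lambda>p. RC_poly k d p e q" for k d e q
  by unfold_locales (simp add: RC_poly_def DQ.add algebra_simps sum.distrib)

sublocale RC_poly_right: additive "RC_poly k d p e" for k d p e
  by unfold_locales (simp add: RC_poly_def DQ.add algebra_simps sum.distrib)

lemma RC_poly_eval_left_monomial:
  assumes "a1 + b1 + a2 + b2 = 2 * m"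
  shows "RC_poly K (d + e - 2 * of_nat m) (ev12 d e p q ((a1,b1),(a2,b2),(0,0))) f r
     = eval_sym (ev3 d e f p q r) (Poly_Mapping.single ((a1,b1),(a2,b2),(0,0)) 1 * (P13 + P23) ^ K)"
proof -
  have de: "d + e - 2 * of_nat m = d + e - of_nat (a1 + b1 + a2 + b2)"
    using assms by simp
  have "eval_sym (ev3 d e f p q r) (Poly_Mapping.single ((a1,b1),(a2,b2),(0,0)) 1 * (P13 + P23) ^ K)
    = (\<Sum>j\<le>K. smult (sc ((-1)^j * of_nat (K choose j)))
       (eval_sym (ev3 d e f p q r) (smono a1 b1 a2 b2 0 0 1 * (S1 + S2) ^ (K - j) * (T1 + T2) ^ j * smono 0 0 0 0 j (K - j) 1)))"
    unfolding power_P13_P23 sum_distrib_left eval_sym.sum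
    by (intro sum.cong refl) (simp add: eval_sym_const_mult[symmetric] smono_def[symmetric] ac_simps)
  also have "\<dots> = RC_poly K (d + e - 2 * of_nat m) (ev12 d e p q ((a1,b1),(a2,b2),(0,0))) f r"
    unfolding eval_sym_Leibniz12 de RC_poly_def smult_sc_sign_of_nat by (simp add: atLeast0AtMost)
  finally show ?thesis by simp
qed

text \<open>Since \<open>P\<^sub>1\<^sub>3 + P\<^sub>2\<^sub>3 = (S\<^sub>1 + S\<^sub>2) T\<^sub>3 - (T\<^sub>1 + T\<^sub>2) S\<^sub>3\<close>, it is the symbol \<open>P\<^sub>1\<^sub>2\<close> for the product of
  the first two factors against the third.\<close>

lemma RC_poly_eval_left:
  assumes "\<forall>k\<in>Poly_Mapping.keys Q. \<exists>a1 b1 a2 b2. k = ((a1,b1),(a2,b2),(0,0)) \<and> a1 + b1 + a2 + b2 = 2 * m"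
  shows "RC_poly K (d + e - 2 * of_nat m) (eval_sym (ev12 d e p q) Q) f r = eval_sym (ev3 d e f p q r) (Q * (P13 + P23) ^ K)"
proof -
  have "RC_poly K (d + e - 2 * of_nat m) (eval_sym (ev12 d e p q) Q) f r
      = (\<Sum>k\<in>Poly_Mapping.keys Q. smult (sc (Poly_Mapping.lookup Q k)) (RC_poly K (d + e - 2 * of_nat m) (ev12 d e p q k) f r))"
    unfolding eval_sym_def RC_poly_left.sum RC_poly_sc_smult_left ..
  also have "\<dots> = (\<Sum>k\<in>Poly_Mapping.keys Q. smult (sc (Poly_Mapping.lookup Q k))
       (eval_sym (ev3 d e f p q r) (Poly_Mapping.single k 1 * (P13 + P23) ^ K)))"
  proof (intro sum.cong refl)
    fix k assume "k \<in> Poly_Mapping.keys Q"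
    then obtain a1 b1 a2 b2 where k: "k = ((a1,b1),(a2,b2),(0,0))" "a1 + b1 + a2 + b2 = 2 * m"
      using assms by blast
    show "smult (sc (Poly_Mapping.lookup Q k)) (RC_poly K (d + e - 2 * of_nat m) (ev12 d e p q k) f r) =
      smult (sc (Poly_Mapping.lookup Q k)) (eval_sym (ev3 d e f p q r) (Poly_Mapping.single k 1 * (P13 + P23) ^ K))"
      unfolding k(1) RC_poly_eval_left_monomial[OF k(2)] ..
  qed
  also have "\<dots> = eval_sym (ev3 d e f p q r) (Q * (P13 + P23) ^ K)"
    by (rule eval_sym_mult_expand[symmetric])
  finally show ?thesis .
qed

lemma RC_poly_eval_right_monomial:
  assumes "a2 + b2 + a3 + b3 = 2 * m"
  shows "RC_poly K d p (e + f - 2 * of_nat m) (ev23 e f q r ((0,0),(a2,b2),(a3,b3)))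
     = eval_sym (ev3 d e f p q r) (Poly_Mapping.single ((0,0),(a2,b2),(a3,b3)) 1 * (P12 + P13) ^ K)"
proof -
  have de: "e + f - 2 * of_nat m = e + f - of_nat (a2 + b2 + a3 + b3)"
    using assms by simp
  have "eval_sym (ev3 d e f p q r) (Poly_Mapping.single ((0,0),(a2,b2),(a3,b3)) 1 * (P12 + P13) ^ K)
    = (\<Sum>j\<le>K. smult (sc ((-1)^j * of_nat (K choose j)))
       (eval_sym (ev3 d e f p q r) (smono 0 0 a2 b2 a3 b3 1 * smono (K - j) j 0 0 0 0 1 * (S2 + S3) ^ j * (T2 + T3) ^ (K - j))))"
    unfolding power_P12_P13 sum_distrib_left eval_sym.sum
    by (intro sum.cong refl) (simp add: eval_sym_const_mult[symmetric] smono_def[symmetric] ac_simps)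
  also have "\<dots> = RC_poly K d p (e + f - 2 * of_nat m) (ev23 e f q r ((0,0),(a2,b2),(a3,b3)))"
    unfolding eval_sym_Leibniz23 de RC_poly_def smult_sc_sign_of_nat by (simp add: atLeast0AtMost)
  finally show ?thesis by simp
qed

lemma RC_poly_eval_right:
  assumes "\<forall>k\<in>Poly_Mapping.keys Q. \<exists>a2 b2 a3 b3. k = ((0,0),(a2,b2),(a3,b3)) \<and> a2 + b2 + a3 + b3 = 2 * m"
  shows "RC_poly K d p (e + f - 2 * of_nat m) (eval_sym (ev23 e f q r) Q) = eval_sym (ev3 d e f p q r) (Q * (P12 + P13) ^ K)"
proof -
  have "RC_poly K d p (e + f - 2 * of_nat m) (eval_sym (ev23 e f q r) Q)
      = (\<Sum>k\<in>Poly_Mapping.keys Q. smult (sc (Poly_Mapping.lookup Q k)) (RC_poly K d p (e + f - 2 * of_nat m) (ev23 e f q r k)))"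
    unfolding eval_sym_def RC_poly_right.sum RC_poly_sc_smult_right ..
  also have "\<dots> = (\<Sum>k\<in>Poly_Mapping.keys Q. smult (sc (Poly_Mapping.lookup Q k))
       (eval_sym (ev3 d e f p q r) (Poly_Mapping.single k 1 * (P12 + P13) ^ K)))"
  proof (intro sum.cong refl)
    fix k assume "k \<in> Poly_Mapping.keys Q"
    then obtain a2 b2 a3 b3 where k: "k = ((0,0),(a2,b2),(a3,b3))" "a2 + b2 + a3 + b3 = 2 * m"
      using assms by blast
    show "smult (sc (Poly_Mapping.lookup Q k)) (RC_poly K d p (e + f - 2 * of_nat m) (ev23 e f q r k)) =
      smult (sc (Poly_Mapping.lookup Q k)) (eval_sym (ev3 d e f p q r) (Poly_Mapping.single k 1 * (P12 + P13) ^ K))"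
      unfolding k(1) RC_poly_eval_right_monomial[OF k(2)] ..
  qed
  also have "\<dots> = eval_sym (ev3 d e f p q r) (Q * (P12 + P13) ^ K)"
    by (rule eval_sym_mult_expand[symmetric])
  finally show ?thesis .
qed

lemma RC_poly_eq_eval_P12: "RC_poly m d p e q = eval_sym (ev12 d e p q) (P12 ^ m)"
  unfolding power_P12 eval_sym.sum eval_sym_smono smult_sc_sign_of_nat RC_poly_def ev12_def by simp

lemma RC_poly_eq_eval_P23: "RC_poly m e q f r = eval_sym (ev23 e f q r) (P23 ^ m)"
  unfolding power_P23 eval_sym.sum eval_sym_smono smult_sc_sign_of_nat RC_poly_def ev23_def by simp

lemma eval_sym_of_nat: "eval_sym T (of_nat c * Q) = of_nat c * eval_sym T Q"
  by (simp add: of_nat_smono eval_sym_const_mult) (simp add: of_nat_poly)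

lemma RC_poly_assoc:
  "(\<Sum>m\<le>n. of_nat (n choose m) * RC_poly (n - m) (d + e - 2 * of_nat m) (RC_poly m d p e q) f r)
 = (\<Sum>m\<le>n. of_nat (n choose m) * RC_poly (n - m) d p (e + f - 2 * of_nat m) (RC_poly m e q f r))"
proof -
  have "(\<Sum>m\<le>n. of_nat (n choose m) * RC_poly (n - m) (d + e - 2 * of_nat m) (RC_poly m d p e q) f r)
      = (\<Sum>m\<le>n. eval_sym (ev3 d e f p q r) (of_nat (n choose m) * P12 ^ m * (P13 + P23) ^ (n - m)))"
  proof (intro sum.cong refl)
    fix m
    show "of_nat (n choose m) * RC_poly (n - m) (d + e - 2 * of_nat m) (RC_poly m d p e q) f r
      = eval_sym (ev3 d e f p q r) (of_nat (n choose m) * P12 ^ m * (P13 + P23) ^ (n - m))"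
      by (simp only: RC_poly_eq_eval_P12[of m d p e q] RC_poly_eval_left[OF keys_power_P12] mult.assoc eval_sym_of_nat)
  qed
  also have "\<dots> = eval_sym (ev3 d e f p q r) ((P12 + (P13 + P23)) ^ n)"
    by (simp only: eval_sym.sum[symmetric] binomial_ring[of P12 "P13 + P23" n])
  also have "\<dots> = eval_sym (ev3 d e f p q r) ((P23 + (P12 + P13)) ^ n)"
    by (simp add: ac_simps)
  also have "\<dots> = (\<Sum>m\<le>n. eval_sym (ev3 d e f p q r) (of_nat (n choose m) * P23 ^ m * (P12 + P13) ^ (n - m)))"
    by (simp only: eval_sym.sum[symmetric] binomial_ring[of P23 "P12 + P13" n])
  also have "\<dots> = (\<Sum>m\<le>n. of_nat (n choose m) * RC_poly (n - m) d p (e + f - 2 * of_nat m) (RC_poly m e q f r))"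
  proof (intro sum.cong refl)
    fix m
    show "eval_sym (ev3 d e f p q r) (of_nat (n choose m) * P23 ^ m * (P12 + P13) ^ (n - m))
      = of_nat (n choose m) * RC_poly (n - m) d p (e + f - 2 * of_nat m) (RC_poly m e q f r)"
      by (simp only: RC_poly_eq_eval_P23[of m e q f r] RC_poly_eval_right[OF keys_power_P23] mult.assoc eval_sym_of_nat)
  qed
  finally show ?thesis .
qed

lemma RC_poly_nested_left_const:
  assumes "m \<le> n"
  shows "of_nat (n choose m) * RC_poly (n - m) (- x + - y - 2 * of_nat m) (RC_poly m (-x) [:f:] (-y) [:g:]) (-z) [:h:]
    = [:of_nat (fact n) * RC (n - m) (x + y + 2 * of_nat m) (RC m x f y g) z h:]"
    (is "?lhs = [:_ * ?rc:]")
proof -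
  have "- x + - y - 2 * of_nat m = - (x + y + 2 * of_nat m)"
    by simp
  then have "?lhs = [:of_nat (n choose m) * (of_nat (fact (n - m)) * (of_nat (fact m) * ?rc)):]"
    by (simp only: RC_poly_const RC_of_nat_left) (simp add: of_nat_poly)
  then show ?thesis
    by (simp only: of_nat_choose_fact_mult[OF assms])
qed

lemma RC_poly_nested_right_const:
  assumes "m \<le> n"
  shows "of_nat (n choose m) * RC_poly (n - m) (-x) [:f:] (- y + - z - 2 * of_nat m) (RC_poly m (-y) [:g:] (-z) [:h:])
    = [:of_nat (fact n) * RC (n - m) x f (y + z + 2 * of_nat m) (RC m y g z h):]"
    (is "?lhs = [:_ * ?rc:]")
proof -
  have "- y + - z - 2 * of_nat m = - (y + z + 2 * of_nat m)"
    by simp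
  then have "?lhs = [:of_nat (n choose m) * (of_nat (fact (n - m)) * (of_nat (fact m) * ?rc)):]"
    by (simp only: RC_poly_const RC_of_nat_right) (simp add: of_nat_poly)
  then show ?thesis
    by (simp only: of_nat_choose_fact_mult[OF assms])
qed

theorem RC_assoc:
  "(\<Sum>r\<le>n. RC (n - r) (x + y + 2 * of_nat r) (RC r x f y g) z h)
 = (\<Sum>r\<le>n. RC (n - r) x f (y + z + 2 * of_nat r) (RC r y g z h))"
  (is "?L = ?R")
proof -
  have "[:of_nat (fact n) * ?L:] = (\<Sum>m\<le>n. [:of_nat (fact n) * RC (n - m) (x + y + 2 * of_nat m) (RC m x f y g) z h:])"
    by (simp add: sum_to_poly sum_distrib_left)
  also have "\<dots> = (\<Sum>m\<le>n. of_nat (n choose m)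
      * RC_poly (n - m) (- x + - y - 2 * of_nat m) (RC_poly m (-x) [:f:] (-y) [:g:]) (-z) [:h:])"
    by (rule sum.cong[OF refl], rule RC_poly_nested_left_const[symmetric]) simp
  also have "\<dots> = (\<Sum>m\<le>n. of_nat (n choose m)
      * RC_poly (n - m) (-x) [:f:] (- y + - z - 2 * of_nat m) (RC_poly m (-y) [:g:] (-z) [:h:]))"
    by (rule RC_poly_assoc)
  also have "\<dots> = (\<Sum>m\<le>n. [:of_nat (fact n) * RC (n - m) x f (y + z + 2 * of_nat m) (RC m y g z h):])"
    by (rule sum.cong[OF refl], rule RC_poly_nested_right_const) simp
  also have "\<dots> = [:of_nat (fact n) * ?R:]"
    by (simp add: sum_to_poly sum_distrib_left)
  finally have "of_nat (fact n) * ?L = of_nat (fact n) * ?R"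
    by simp
  then have "sc (of_nat (fact n)) * ?L = sc (of_nat (fact n)) * ?R"
    by (simp only: sc_of_nat)
  then show ?thesis
    by (rule sc_mult_cancel[rotated]) simp
qed

end

section \<open>The derivation \<open>S\<^sub>a\<^sub>,\<^sub>b\<close>\<close>

text \<open>The derivative along one coordinate of the exponent monoid: \<open>sel m\<close> is the exponent of that
  coordinate in \<open>m\<close> and \<open>dec m\<close> lowers it by one.\<close>

definition coord_deriv :: "('m \<Rightarrow> nat) \<Rightarrow> ('m \<Rightarrow> 'm) \<Rightarrow> ('m \<Rightarrow>\<^sub>0 complex) \<Rightarrow> 'm \<Rightarrow>\<^sub>0 complex" where
  "coord_deriv sel dec f = (\<Sum>m\<in>Poly_Mapping.keys f. Poly_Mapping.single (dec m) (of_nat (sel m) * Poly_Mapping.lookup f m))"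

lemma coord_deriv_superset:
  assumes "finite S" "Poly_Mapping.keys f \<subseteq> S"
  shows "coord_deriv sel dec f = (\<Sum>m\<in>S. Poly_Mapping.single (dec m) (of_nat (sel m) * Poly_Mapping.lookup f m))"
  unfolding coord_deriv_def
  by (rule sum.mono_neutral_left[OF assms]) (auto simp: in_keys_iff)

global_interpretation coord_deriv: additive "coord_deriv sel dec" for sel dec
proof
  fix f g :: "'a \<Rightarrow>\<^sub>0 complex"
  let ?S = "Poly_Mapping.keys f \<union> Poly_Mapping.keys g"
  have "coord_deriv sel dec (f + g) = (\<Sum>m\<in>?S. Poly_Mapping.single (dec m) (of_nat (sel m) * Poly_Mapping.lookup (f + g) m))"
    using keys_add[of f g] by (intro coord_deriv_superset) auto
  also have "\<dots> = (\<Sum>m\<in>?S. Poly_Mapping.single (dec m) (of_nat (sel m) * Poly_Mapping.lookup f m))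
     + (\<Sum>m\<in>?S. Poly_Mapping.single (dec m) (of_nat (sel m) * Poly_Mapping.lookup g m))"
    by (simp add: lookup_add algebra_simps single_add sum.distrib)
  also have "\<dots> = coord_deriv sel dec f + coord_deriv sel dec g"
    by (subst (1 2) coord_deriv_superset[where S="?S"]) auto
  finally show "coord_deriv sel dec (f + g) = coord_deriv sel dec f + coord_deriv sel dec g" .
qed

lemma coord_deriv_single: "coord_deriv sel dec (Poly_Mapping.single m c) = Poly_Mapping.single (dec m) (of_nat (sel m) * c)"
  by (cases "c = 0") (simp_all add: coord_deriv_def)

lemma keys_coord_deriv: "Poly_Mapping.keys (coord_deriv sel dec f) \<subseteq> dec ` {m \<in> Poly_Mapping.keys f. sel m > 0}"
proof
  fix x assume "x \<in> Poly_Mapping.keys (coord_deriv sel dec f)"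
  then have "x \<in> (\<Union>m\<in>Poly_Mapping.keys f. Poly_Mapping.keys (Poly_Mapping.single (dec m) (of_nat (sel m) * Poly_Mapping.lookup f m)))"
    unfolding coord_deriv_def by (rule subsetD[OF keys_sum])
  then show "x \<in> dec ` {m \<in> Poly_Mapping.keys f. sel m > 0}"
    by (auto simp: in_keys_iff split: if_splits)
qed

context
  fixes sel :: "'m::comm_monoid_add \<Rightarrow> nat" and dec :: "'m \<Rightarrow> 'm"
  assumes sel_add: "\<And>m m'. sel (m + m') = sel m + sel m'"
    and dec_add: "\<And>m m'. sel m > 0 \<Longrightarrow> dec (m + m') = dec m + m'"
begin

lemma coord_deriv_single_mult:
  "coord_deriv sel dec (Poly_Mapping.single m a * Poly_Mapping.single m' b) =
      coord_deriv sel dec (Poly_Mapping.single m a) * Poly_Mapping.single m' b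
    + Poly_Mapping.single m a * coord_deriv sel dec (Poly_Mapping.single m' b)"
proof -
  have d1: "sel m > 0 \<Longrightarrow> dec (m + m') = dec m + m'"
    by (rule dec_add)
  have d2: "sel m' > 0 \<Longrightarrow> dec (m + m') = m + dec m'"
    using dec_add[of m' m] by (simp add: add.commute)
  show ?thesis
  proof (cases "sel m = 0"; cases "sel m' = 0")
    assume "sel m = 0" "sel m' = 0"
    then show ?thesis by (simp add: coord_deriv_single mult_single sel_add)
  next
    assume "sel m = 0" "sel m' \<noteq> 0"
    then show ?thesis by (simp add: coord_deriv_single mult_single sel_add d2 mult.assoc mult.commute mult.left_commute)
  next
    assume "sel m \<noteq> 0" "sel m' = 0"
    then show ?thesis using add.commute[of m' "dec m"]
      by (simp add: coord_deriv_single mult_single sel_add d1 mult.assoc mult.commute mult.left_commute)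
  next
    assume "sel m \<noteq> 0" "sel m' \<noteq> 0"
    then have "dec m + m' = dec (m + m')" "m + dec m' = dec (m + m')"
      using d1 d2 by auto
    then show ?thesis using add.commute[of m' "dec m"]
      by (simp add: coord_deriv_single mult_single sel_add single_add[symmetric]
          distrib_right distrib_left mult.assoc mult.commute mult.left_commute)
  qed
qed

lemma coord_deriv_mult: "coord_deriv sel dec (f * g) = coord_deriv sel dec f * g + f * coord_deriv sel dec g"
proof -
  let ?f = "\<lambda>m. Poly_Mapping.single m (Poly_Mapping.lookup f m)"
  let ?g = "\<lambda>m. Poly_Mapping.single m (Poly_Mapping.lookup g m)"
  have "coord_deriv sel dec (f * g) = coord_deriv sel dec ((\<Sum>m\<in>Poly_Mapping.keys f. ?f m) * (\<Sum>m\<in>Poly_Mapping.keys g. ?g m))"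
    by (simp flip: poly_mapping_single_expansion)
  also have "\<dots> = (\<Sum>m\<in>Poly_Mapping.keys f. \<Sum>m'\<in>Poly_Mapping.keys g.
      coord_deriv sel dec (?f m) * ?g m' + ?f m * coord_deriv sel dec (?g m'))"
    by (simp only: sum_product coord_deriv.sum coord_deriv_single_mult)
  also have "\<dots> = (\<Sum>m\<in>Poly_Mapping.keys f. coord_deriv sel dec (?f m)) * (\<Sum>m'\<in>Poly_Mapping.keys g. ?g m')
      + (\<Sum>m\<in>Poly_Mapping.keys f. ?f m) * (\<Sum>m'\<in>Poly_Mapping.keys g. coord_deriv sel dec (?g m'))"
    by (simp only: sum.distrib sum_product)
  also have "\<dots> = coord_deriv sel dec f * g + f * coord_deriv sel dec g"
    by (simp only: coord_deriv.sum[symmetric] poly_mapping_single_expansion[symmetric])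
  finally show ?thesis .
qed

end

definition sel4 :: "mono \<Rightarrow> nat" where "sel4 = (\<lambda>(i,j,k,l). i)"
definition dec4 :: "mono \<Rightarrow> mono" where "dec4 = (\<lambda>(i,j,k,l). (i - 1, j, k, l))"
definition sel6 :: "mono \<Rightarrow> nat" where "sel6 = (\<lambda>(i,j,k,l). j)"
definition dec6 :: "mono \<Rightarrow> mono" where "dec6 = (\<lambda>(i,j,k,l). (i, j - 1, k, l))"
definition selA :: "mono \<Rightarrow> nat" where "selA = (\<lambda>(i,j,k,l). k)"
definition decA :: "mono \<Rightarrow> mono" where "decA = (\<lambda>(i,j,k,l). (i, j, k - 1, l))"
definition selB :: "mono \<Rightarrow> nat" where "selB = (\<lambda>(i,j,k,l). l)"
definition decB :: "mono \<Rightarrow> mono" where "decB = (\<lambda>(i,j,k,l). (i, j, k, l - 1))"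

lemma pdE4_coord_deriv: "pdE4 = coord_deriv sel4 dec4"
  by (auto simp: pdE4_def coord_deriv_def sel4_def dec4_def fun_eq_iff split: prod.splits intro!: sum.cong)

lemma pdE6_coord_deriv: "pdE6 = coord_deriv sel6 dec6"
  by (auto simp: pdE6_def coord_deriv_def sel6_def dec6_def fun_eq_iff split: prod.splits intro!: sum.cong)

lemma pdA_coord_deriv: "pdA = coord_deriv selA decA"
  by (auto simp: pdA_def coord_deriv_def selA_def decA_def fun_eq_iff split: prod.splits intro!: sum.cong)

lemma pdB_coord_deriv: "pdB = coord_deriv selB decB"
  by (auto simp: pdB_def coord_deriv_def selB_def decB_def fun_eq_iff split: prod.splits intro!: sum.cong)

lemma pdE4_mult: "pdE4 (f * g) = pdE4 f * g + f * pdE4 g"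
  unfolding pdE4_coord_deriv by (rule coord_deriv_mult) (auto simp: sel4_def dec4_def split: prod.splits)

lemma pdE6_mult: "pdE6 (f * g) = pdE6 f * g + f * pdE6 g"
  unfolding pdE6_coord_deriv by (rule coord_deriv_mult) (auto simp: sel6_def dec6_def split: prod.splits)

lemma pdA_mult: "pdA (f * g) = pdA f * g + f * pdA g"
  unfolding pdA_coord_deriv by (rule coord_deriv_mult) (auto simp: selA_def decA_def split: prod.splits)

lemma pdB_mult: "pdB (f * g) = pdB f * g + f * pdB g"
  unfolding pdB_coord_deriv by (rule coord_deriv_mult) (auto simp: selB_def decB_def split: prod.splits)

lemma cst_add: "cst (x + y) = cst x + cst y"
  by (simp add: cst_def single_add)

lemma cst_mult: "cst (x * y) = cst x * cst y"
  by (simp add: cst_def mult_single)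

lemma cst_one: "cst 1 = 1"
  by (simp add: cst_def flip: zero_prod_def)

lemma Sab_add: "Sab a b (f + g) = Sab a b f + Sab a b g"
  by (simp add: Sab_def pdE4_coord_deriv pdE6_coord_deriv pdA_coord_deriv pdB_coord_deriv
      coord_deriv.add algebra_simps)

lemma Sab_mult: "Sab a b (f * g) = Sab a b f * g + f * Sab a b g"
  by (simp add: Sab_def pdE4_mult pdE6_mult pdA_mult pdB_mult algebra_simps)

lemma Sab_cst: "Sab a b (cst c) = 0"
  by (simp add: Sab_def pdE4_coord_deriv pdE6_coord_deriv pdA_coord_deriv pdB_coord_deriv cst_def
      coord_deriv_single sel4_def sel6_def selA_def selB_def)

global_interpretation Sab: scalar_derivation cst "Sab a b" for a b
  by unfold_locales (simp_all add: cst_add cst_mult cst_one Sab_add Sab_mult Sab_cst)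

lemma bhom_eq_RC:
  "bhom a b c n k p f l q g = Sab.RC a b n (of_int k + c * of_nat p) f (of_int l + c * of_nat q) g"
  by (simp add: bhom_def Sab.RC_def)

section \<open>The bigrading\<close>

lemma wt_add: "wt (m + m') = wt m + wt m'"
  by (cases m; cases m') auto

lemma idx_add: "idx (m + m') = idx m + idx m'"
  by (cases m; cases m') auto

lemma Jhom_iff: "f \<in> Jhom k p \<longleftrightarrow> (\<forall>m\<in>Poly_Mapping.keys f. wt m = k \<and> idx m = p)"
  by (simp add: Jhom_def)

lemma Jhom_zero [simp]: "0 \<in> Jhom k p"
  by (simp add: Jhom_iff)

lemma Jhom_add: "f \<in> Jhom k p \<Longrightarrow> g \<in> Jhom k p \<Longrightarrow> f + g \<in> Jhom k p"
  using keys_add[of f g] unfolding Jhom_iff by blast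

lemma Jhom_sum: "(\<And>i. i \<in> I \<Longrightarrow> g i \<in> Jhom k p) \<Longrightarrow> sum g I \<in> Jhom k p"
  by (induction I rule: infinite_finite_induct) (auto intro: Jhom_add)

lemma Jhom_mult: "f \<in> Jhom k p \<Longrightarrow> g \<in> Jhom l q \<Longrightarrow> f * g \<in> Jhom (k + l) (p + q)"
  using keys_mult[of f g] unfolding Jhom_iff by (fastforce simp: wt_add idx_add)

lemma Jhom_cst: "cst c \<in> Jhom 0 0"
  by (simp add: Jhom_iff cst_def)

lemma Jhom_E4: "E4 \<in> Jhom 4 0"
  by (simp add: Jhom_iff E4_def)

lemma Jhom_E6: "E6 \<in> Jhom 6 0"
  by (simp add: Jhom_iff E6_def)

lemma Jhom_A: "Aj \<in> Jhom (-2) 1"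
  by (simp add: Jhom_iff Aj_def)

lemma Jhom_B: "Bj \<in> Jhom 0 1"
  by (simp add: Jhom_iff Bj_def)

lemma Jhom_pdE4: "f \<in> Jhom k p \<Longrightarrow> pdE4 f \<in> Jhom (k - 4) p"
  using keys_coord_deriv[of sel4 dec4 f] unfolding pdE4_coord_deriv Jhom_iff
  by (fastforce simp: sel4_def dec4_def split: prod.splits)

lemma Jhom_pdE6: "f \<in> Jhom k p \<Longrightarrow> pdE6 f \<in> Jhom (k - 6) p"
  using keys_coord_deriv[of sel6 dec6 f] unfolding pdE6_coord_deriv Jhom_iff
  by (fastforce simp: sel6_def dec6_def split: prod.splits)

lemma Jhom_pdA: "f \<in> Jhom k p \<Longrightarrow> pdA f \<in> Jhom (k + 2) (p - 1)"
  using keys_coord_deriv[of selA decA f] unfolding pdA_coord_deriv Jhom_iff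
  by (fastforce simp: selA_def decA_def split: prod.splits)

lemma Jhom_pdB: "f \<in> Jhom k p \<Longrightarrow> pdB f \<in> Jhom k (p - 1)"
  using keys_coord_deriv[of selB decB f] unfolding pdB_coord_deriv Jhom_iff
  by (fastforce simp: selB_def decB_def split: prod.splits)

lemma Mstar_iff: "f \<in> Mstar \<longleftrightarrow> (\<forall>m\<in>Poly_Mapping.keys f. idx m = 0)"
  unfolding Mstar_def by (auto split: prod.splits)

lemma Jhom_index_0_Mstar: "f \<in> Jhom k 0 \<Longrightarrow> f \<in> Mstar"
  by (simp add: Jhom_iff Mstar_iff)

lemma Mstar_pdA:
  assumes "f \<in> Mstar"
  shows "pdA f = 0"
proof -
  have "Poly_Mapping.keys (pdA f) = {}"
    using keys_coord_deriv[of selA decA f] assms unfolding pdA_coord_deriv Mstar_iff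
    by (fastforce simp: selA_def decA_def split: prod.splits)
  then show ?thesis
    by simp
qed

lemma Mstar_pdB:
  assumes "f \<in> Mstar"
  shows "pdB f = 0"
proof -
  have "Poly_Mapping.keys (pdB f) = {}"
    using keys_coord_deriv[of selB decB f] assms unfolding pdB_coord_deriv Mstar_iff
    by (fastforce simp: selB_def decB_def split: prod.splits)
  then show ?thesis
    by simp
qed

lemma Jhom_Sab:
  assumes f: "f \<in> Jhom k p"
  shows "Sab a b f \<in> Jhom (k + 2) p"
proof -
  have "cst (-1/3) * E6 * pdE4 f \<in> Jhom (0 + 6 + (k - 4)) (0 + 0 + p)"
    by (intro Jhom_mult Jhom_cst Jhom_E6 Jhom_pdE4 f)
  then have t1: "cst (-1/3) * E6 * pdE4 f \<in> Jhom (k + 2) p"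
    by (simp add: algebra_simps)
  have "cst (-1/2) * E4^2 * pdE6 f \<in> Jhom (0 + (4 + 4) + (k - 6)) (0 + (0 + 0) + p)"
    unfolding power2_eq_square by (intro Jhom_mult Jhom_cst Jhom_E4 Jhom_pdE6 f)
  then have t2: "cst (-1/2) * E4^2 * pdE6 f \<in> Jhom (k + 2) p"
    by (simp add: algebra_simps)
  \<comment> \<open>for \<open>p = 0\<close> the index \<open>p - 1\<close> below is truncated, but then \<open>pdA f = pdB f = 0\<close>\<close>
  have t3: "cst a * Bj * pdA f \<in> Jhom (k + 2) p"
  proof (cases "p = 0")
    case True
    then show ?thesis using Mstar_pdA Jhom_index_0_Mstar f by simp
  next
    case False
    have "cst a * Bj * pdA f \<in> Jhom (0 + 0 + (k + 2)) (0 + 1 + (p - 1))"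
      by (intro Jhom_mult Jhom_cst Jhom_B Jhom_pdA f)
    with False show ?thesis by simp
  qed
  have t4: "cst b * E4 * Aj * pdB f \<in> Jhom (k + 2) p"
  proof (cases "p = 0")
    case True
    then show ?thesis using Mstar_pdB Jhom_index_0_Mstar f by simp
  next
    case False
    have "cst b * E4 * Aj * pdB f \<in> Jhom (0 + 4 + -2 + k) (0 + 0 + 1 + (p - 1))"
      by (intro Jhom_mult Jhom_cst Jhom_E4 Jhom_A Jhom_pdB f)
    with False show ?thesis by (simp add: algebra_simps)
  qed
  show ?thesis
    unfolding Sab_def by (intro Jhom_add t1 t2 t3 t4)
qed

lemma Jhom_Sab_power: "f \<in> Jhom k p \<Longrightarrow> (Sab a b ^^ r) f \<in> Jhom (k + 2 * int r) p"
  by (induction r) (auto dest: Jhom_Sab[of _ _ _ a b] simp: algebra_simps)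

lemma lookup_comp: "Poly_Mapping.lookup (comp f k p) m = (if wt m = k \<and> idx m = p then Poly_Mapping.lookup f m else 0)"
proof -
  have "Poly_Mapping.lookup (comp f k p) m = (\<Sum>m'\<in>{m' \<in> Poly_Mapping.keys f. wt m' = k \<and> idx m' = p}.
      (if m' = m then Poly_Mapping.lookup f m' else 0))"
    unfolding comp_def lookup_sum by (intro sum.cong refl) (simp add: lookup_single when_def)
  also have "\<dots> = (if wt m = k \<and> idx m = p then Poly_Mapping.lookup f m else 0)"
    by (simp add: sum.delta' in_keys_iff)
  finally show ?thesis .
qed

lemma comp_add: "comp (f + g) k p = comp f k p + comp g k p"
  by (rule poly_mapping_eqI) (simp add: lookup_comp lookup_add)

lemma Jhom_comp: "comp f k p \<in> Jhom k p"
  unfolding Jhom_iff by (auto simp: in_keys_iff lookup_comp split: if_splits)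

lemma comp_Jhom: "f \<in> Jhom k p \<Longrightarrow> comp f k p = f"
  unfolding Jhom_iff by (intro poly_mapping_eqI) (auto simp: lookup_comp in_keys_iff)

lemma comp_notin: "(k, p) \<notin> degs f \<Longrightarrow> comp f k p = 0"
  unfolding degs_def by (intro poly_mapping_eqI) (auto simp: lookup_comp in_keys_iff)

lemma degs_Jhom: "f \<in> Jhom k p \<Longrightarrow> degs f \<subseteq> {(k, p)}"
  unfolding degs_def Jhom_iff by auto

lemma finite_degs [simp]: "finite (degs f)"
  by (simp add: degs_def)

lemma sum_comp: "f = (\<Sum>d\<in>degs f. comp f (fst d) (snd d))"
proof (rule poly_mapping_eqI)
  fix m
  have "Poly_Mapping.lookup (\<Sum>d\<in>degs f. comp f (fst d) (snd d)) m
      = (\<Sum>d\<in>degs f. if d = (wt m, idx m) then Poly_Mapping.lookup f m else 0)"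
    unfolding lookup_sum by (intro sum.cong refl) (auto simp: lookup_comp)
  also have "\<dots> = Poly_Mapping.lookup f m"
    by (auto simp: sum.delta' degs_def in_keys_iff)
  finally show "Poly_Mapping.lookup f m = Poly_Mapping.lookup (\<Sum>d\<in>degs f. comp f (fst d) (snd d)) m" ..
qed

lemma bhom_zero_left [simp]: "bhom a b c n k p 0 l q g = 0"
  by (simp add: bhom_eq_RC Sab.RC_left.zero)

lemma bhom_zero_right [simp]: "bhom a b c n k p f l q 0 = 0"
  by (simp add: bhom_eq_RC Sab.RC_right.zero)

lemma bhom_add_left: "bhom a b c n k p (f1 + f2) l q g = bhom a b c n k p f1 l q g + bhom a b c n k p f2 l q g"
  by (simp add: bhom_eq_RC Sab.RC_left.add)

lemma bhom_add_right: "bhom a b c n k p f l q (g1 + g2) = bhom a b c n k p f l q g1 + bhom a b c n k p f l q g2"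
  by (simp add: bhom_eq_RC Sab.RC_right.add)

lemma bracket_superset:
  assumes "finite S" "degs f \<subseteq> S" "finite T" "degs g \<subseteq> T"
  shows "bracket a b c n f g = (\<Sum>(k, p)\<in>S. \<Sum>(l, q)\<in>T. bhom a b c n k p (comp f k p) l q (comp g l q))"
proof -
  have "bracket a b c n f g = (\<Sum>(k, p)\<in>degs f. \<Sum>(l, q)\<in>T. bhom a b c n k p (comp f k p) l q (comp g l q))"
    unfolding bracket_def
  proof (intro sum.cong refl)
    fix d assume "d \<in> degs f"
    show "(case d of (k, p) \<Rightarrow> \<Sum>(l, q)\<in>degs g. bhom a b c n k p (comp f k p) l q (comp g l q))
        = (case d of (k, p) \<Rightarrow> \<Sum>(l, q)\<in>T. bhom a b c n k p (comp f k p) l q (comp g l q))"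
      by (cases d) (auto intro!: sum.mono_neutral_left assms simp: comp_notin)
  qed
  also have "\<dots> = (\<Sum>(k, p)\<in>S. \<Sum>(l, q)\<in>T. bhom a b c n k p (comp f k p) l q (comp g l q))"
    by (intro sum.mono_neutral_left assms) (auto simp: comp_notin)
  finally show ?thesis .
qed

global_interpretation bracket_left: additive "\<lambda>f. bracket a b c n f g" for a b c n g
proof
  fix f1 f2
  let ?S = "degs f1 \<union> degs f2 \<union> degs (f1 + f2)"
  show "bracket a b c n (f1 + f2) g = bracket a b c n f1 g + bracket a b c n f2 g"
    by (subst (1 2 3) bracket_superset[where S="?S" and T="degs g"])
       (auto simp: comp_add bhom_add_left sum.distrib split_def)
qed

global_interpretation bracket_right: additive "bracket a b c n f" for a b c n f
proof
  fix g1 g2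
  let ?T = "degs g1 \<union> degs g2 \<union> degs (g1 + g2)"
  show "bracket a b c n f (g1 + g2) = bracket a b c n f g1 + bracket a b c n f g2"
    by (subst (1 2 3) bracket_superset[where S="degs f" and T="?T"])
       (auto simp: comp_add bhom_add_right sum.distrib split_def)
qed

lemma bracket_hom:
  assumes "f \<in> Jhom k p" "g \<in> Jhom l q"
  shows "bracket a b c n f g = bhom a b c n k p f l q g"
  using bracket_superset[of "{(k,p)}" f "{(l,q)}" g a b c n] degs_Jhom[OF assms(1)] degs_Jhom[OF assms(2)]
  by (simp add: comp_Jhom assms)

lemma Jhom_bhom:
  assumes "f \<in> Jhom k p" "g \<in> Jhom l q"
  shows "bhom a b c n k p f l q g \<in> Jhom (k + l + 2 * int n) (p + q)"
  unfolding bhom_def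
proof (rule Jhom_sum)
  fix r assume "r \<in> {0..n}"
  then have "k + 2 * int r + (l + 2 * int (n - r)) = k + l + 2 * int n"
    by (simp add: of_nat_diff)
  moreover have "(Sab a b ^^ r) f * (Sab a b ^^ (n - r)) g \<in> Jhom (k + 2 * int r + (l + 2 * int (n - r))) (p + q)"
    by (rule Jhom_mult[OF Jhom_Sab_power[OF assms(1)] Jhom_Sab_power[OF assms(2)]])
  ultimately have "(Sab a b ^^ r) f * (Sab a b ^^ (n - r)) g \<in> Jhom (k + l + 2 * int n) (p + q)"
    by (simp only:)
  then show "cst ((- 1) ^ r * (of_int k + c * of_nat p + of_nat n - 1 gchoose (n - r)) *
             (of_int l + c * of_nat q + of_nat n - 1 gchoose r)) *
        ((Sab a b ^^ r) f * (Sab a b ^^ (n - r)) g) \<in> Jhom (k + l + 2 * int n) (p + q)"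
    using Jhom_mult[OF Jhom_cst] by fastforce
qed

lemma bracket_Jhom:
  assumes "f \<in> Jhom k p" "g \<in> Jhom l q"
  shows "bracket a b c n f g \<in> Jhom (k + l + 2 * int n) (p + q)"
  using assms by (simp add: bracket_hom Jhom_bhom)

section \<open>The deformation identity\<close>

lemma bracket_nested_left_hom:
  assumes "f \<in> Jhom k p" "g \<in> Jhom l q" "h \<in> Jhom k' p'"
  shows "bracket a b c m (bracket a b c r f g) h
    = Sab.RC a b m ((of_int k + c * of_nat p) + (of_int l + c * of_nat q) + 2 * of_nat r)
        (Sab.RC a b r (of_int k + c * of_nat p) f (of_int l + c * of_nat q) g) (of_int k' + c * of_nat p') h"
proof -
  have "bracket a b c m (bracket a b c r f g) h
      = bhom a b c m (k + l + 2 * int r) (p + q) (bhom a b c r k p f l q g) k' p' h"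
    unfolding bracket_hom[OF assms(1,2)] by (rule bracket_hom[OF Jhom_bhom[OF assms(1,2)] assms(3)])
  then show ?thesis
    by (simp add: bhom_eq_RC algebra_simps)
qed

lemma bracket_nested_right_hom:
  assumes "f \<in> Jhom k p" "g \<in> Jhom l q" "h \<in> Jhom k' p'"
  shows "bracket a b c m f (bracket a b c r g h)
    = Sab.RC a b m (of_int k + c * of_nat p) f ((of_int l + c * of_nat q) + (of_int k' + c * of_nat p') + 2 * of_nat r)
        (Sab.RC a b r (of_int l + c * of_nat q) g (of_int k' + c * of_nat p') h)"
proof -
  have "bracket a b c m f (bracket a b c r g h)
      = bhom a b c m k p f (l + k' + 2 * int r) (q + p') (bhom a b c r l q g k' p' h)"
    unfolding bracket_hom[OF assms(2,3)] by (rule bracket_hom[OF assms(1) Jhom_bhom[OF assms(2,3)]])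
  then show ?thesis
    by (simp add: bhom_eq_RC algebra_simps)
qed

definition deform_lhs :: "complex \<Rightarrow> complex \<Rightarrow> complex \<Rightarrow> nat \<Rightarrow> jac \<Rightarrow> jac \<Rightarrow> jac \<Rightarrow> jac" where
  "deform_lhs a b c n f g h = (\<Sum>r=0..n. bracket a b c (n - r) (bracket a b c r f g) h)"

definition deform_rhs :: "complex \<Rightarrow> complex \<Rightarrow> complex \<Rightarrow> nat \<Rightarrow> jac \<Rightarrow> jac \<Rightarrow> jac \<Rightarrow> jac" where
  "deform_rhs a b c n f g h = (\<Sum>r=0..n. bracket a b c (n - r) f (bracket a b c r g h))"

lemma deform_lhs_eq_rhs_hom:
  assumes "f \<in> Jhom k p" "g \<in> Jhom l q" "h \<in> Jhom k' p'"
  shows "deform_lhs a b c n f g h = deform_rhs a b c n f g h"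
  unfolding deform_lhs_def deform_rhs_def atLeast0AtMost
  by (simp add: bracket_nested_left_hom[OF assms] bracket_nested_right_hom[OF assms] Sab.RC_assoc)

lemma deform_lhs_expand:
  "deform_lhs a b c n f g h = (\<Sum>e'\<in>degs h. \<Sum>e\<in>degs g. \<Sum>d\<in>degs f.
      deform_lhs a b c n (comp f (fst d) (snd d)) (comp g (fst e) (snd e)) (comp h (fst e') (snd e')))"
  by (subst (1) sum_comp[of f], subst (1) sum_comp[of g], subst (1) sum_comp[of h])
     (simp only: deform_lhs_def bracket_left.sum bracket_right.sum sum.swap[of _ "{0..n}"])

lemma deform_rhs_expand:
  "deform_rhs a b c n f g h = (\<Sum>e'\<in>degs h. \<Sum>e\<in>degs g. \<Sum>d\<in>degs f.
      deform_rhs a b c n (comp f (fst d) (snd d)) (comp g (fst e) (snd e)) (comp h (fst e') (snd e')))"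
  by (subst (1) sum_comp[of f], subst (1) sum_comp[of g], subst (1) sum_comp[of h])
     (simp only: deform_rhs_def bracket_left.sum bracket_right.sum sum.swap[of _ "{0..n}"])

lemma deform_lhs_eq_rhs: "deform_lhs a b c n f g h = deform_rhs a b c n f g h"
  unfolding deform_lhs_expand[of _ _ _ _ f g h] deform_rhs_expand[of _ _ _ _ f g h]
  by (intro sum.cong refl deform_lhs_eq_rhs_hom[OF Jhom_comp Jhom_comp Jhom_comp])

lemma bracket_0_eq_mult: "bracket a b c 0 f g = f * g"
proof -
  have "bracket a b c 0 f g = (\<Sum>d\<in>degs f. \<Sum>e\<in>degs g. comp f (fst d) (snd d) * comp g (fst e) (snd e))"
    unfolding bracket_def by (simp add: bhom_def Sab.sc_one split_def)
  also have "\<dots> = (\<Sum>d\<in>degs f. comp f (fst d) (snd d)) * (\<Sum>e\<in>degs g. comp g (fst e) (snd e))"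
    by (rule sum_product[symmetric])
  also have "\<dots> = f * g"
    by (simp only: flip: sum_comp)
  finally show ?thesis .
qed

section \<open>Modular forms\<close>

lemma Mstar_zero [simp]: "0 \<in> Mstar"
  by (simp add: Mstar_iff)

lemma Mstar_add: "f \<in> Mstar \<Longrightarrow> g \<in> Mstar \<Longrightarrow> f + g \<in> Mstar"
  using keys_add[of f g] unfolding Mstar_iff by blast

lemma Mstar_sum: "(\<And>i. i \<in> I \<Longrightarrow> g i \<in> Mstar) \<Longrightarrow> sum g I \<in> Mstar"
  by (induction I rule: infinite_finite_induct) (auto intro: Mstar_add)

lemma Mstar_mult: "f \<in> Mstar \<Longrightarrow> g \<in> Mstar \<Longrightarrow> f * g \<in> Mstar"
  using keys_mult[of f g] unfolding Mstar_iff by (fastforce simp: idx_add)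

lemma Mstar_cst: "cst c \<in> Mstar"
  by (simp add: Mstar_iff cst_def)

lemma Mstar_E4: "E4 \<in> Mstar"
  by (simp add: Mstar_iff E4_def)

lemma Mstar_E6: "E6 \<in> Mstar"
  by (simp add: Mstar_iff E6_def)

lemma Mstar_pdE4: "f \<in> Mstar \<Longrightarrow> pdE4 f \<in> Mstar"
  using keys_coord_deriv[of sel4 dec4 f] unfolding pdE4_coord_deriv Mstar_iff
  by (fastforce simp: sel4_def dec4_def split: prod.splits)

lemma Mstar_pdE6: "f \<in> Mstar \<Longrightarrow> pdE6 f \<in> Mstar"
  using keys_coord_deriv[of sel6 dec6 f] unfolding pdE6_coord_deriv Mstar_iff
  by (fastforce simp: sel6_def dec6_def split: prod.splits)

lemma Mstar_serre: "f \<in> Mstar \<Longrightarrow> serre f \<in> Mstar"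
  unfolding serre_def power2_eq_square
  by (intro Mstar_add Mstar_mult Mstar_cst Mstar_E4 Mstar_E6 Mstar_pdE4 Mstar_pdE6)

lemma Sab_Mstar: "f \<in> Mstar \<Longrightarrow> Sab a b f = serre f"
  by (simp add: Sab_def serre_def Mstar_pdA Mstar_pdB)

lemma Sab_power_Mstar: "f \<in> Mstar \<Longrightarrow> (Sab a b ^^ r) f = (serre ^^ r) f \<and> (serre ^^ r) f \<in> Mstar"
  by (induction r) (auto simp: Sab_Mstar Mstar_serre)

lemma Mstar_comp: "f \<in> Mstar \<Longrightarrow> comp f k p \<in> Mstar"
  unfolding Mstar_iff by (auto simp: in_keys_iff lookup_comp split: if_splits)

lemma Mstar_bracket: "f \<in> Mstar \<Longrightarrow> g \<in> Mstar \<Longrightarrow> bracket a b c n f g \<in> Mstar"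
  unfolding bracket_def bhom_def
  by (auto simp: split_def Sab_power_Mstar Mstar_comp intro!: Mstar_sum Mstar_mult Mstar_cst)

lemma lookup_wcomp: "Poly_Mapping.lookup (wcomp f k) m = (if wt m = k then Poly_Mapping.lookup f m else 0)"
proof -
  have "Poly_Mapping.lookup (wcomp f k) m = (\<Sum>m'\<in>{m' \<in> Poly_Mapping.keys f. wt m' = k}.
      (if m' = m then Poly_Mapping.lookup f m' else 0))"
    unfolding wcomp_def lookup_sum by (intro sum.cong refl) (simp add: lookup_single when_def)
  also have "\<dots> = (if wt m = k then Poly_Mapping.lookup f m else 0)"
    by (simp add: sum.delta' in_keys_iff)
  finally show ?thesis .
qed

lemma comp_0_eq_wcomp:
  assumes "f \<in> Mstar"
  shows "comp f k 0 = wcomp f k"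
proof (rule poly_mapping_eqI)
  fix m
  show "Poly_Mapping.lookup (comp f k 0) m = Poly_Mapping.lookup (wcomp f k) m"
  proof (cases "m \<in> Poly_Mapping.keys f")
    case True
    then have "idx m = 0"
      using assms unfolding Mstar_iff by blast
    then show ?thesis
      by (simp add: lookup_comp lookup_wcomp)
  qed (simp add: lookup_comp lookup_wcomp in_keys_iff)
qed

lemma Mstar_wcomp: "f \<in> Mstar \<Longrightarrow> wcomp f k \<in> Mstar"
  using comp_0_eq_wcomp Mstar_comp by metis

lemma degs_Mstar: "f \<in> Mstar \<Longrightarrow> degs f = (\<lambda>k. (k, 0)) ` wts f"
  unfolding degs_def wts_def Mstar_iff by force

lemma bhom_eq_src_hom: "f \<in> Mstar \<Longrightarrow> g \<in> Mstar \<Longrightarrow> bhom a b c n k 0 f l 0 g = src_hom n k f l g"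
  unfolding bhom_def src_hom_def by (intro sum.cong refl) (simp add: Sab_power_Mstar)

lemma bracket_eq_SRC: "f \<in> Mstar \<Longrightarrow> g \<in> Mstar \<Longrightarrow> bracket a b c n f g = SRC n f g"
proof -
  assume f: "f \<in> Mstar" and g: "g \<in> Mstar"
  have "inj_on (\<lambda>k. (k, 0::nat)) S" for S :: "int set"
    by (rule inj_onI) simp
  then have "bracket a b c n f g = (\<Sum>k\<in>wts f. \<Sum>l\<in>wts g. bhom a b c n k 0 (comp f k 0) l 0 (comp g l 0))"
    unfolding bracket_def degs_Mstar[OF f] degs_Mstar[OF g] by (simp add: sum.reindex)
  also have "\<dots> = SRC n f g"
    unfolding SRC_def by (intro sum.cong refl) (simp add: comp_0_eq_wcomp f g bhom_eq_src_hom Mstar_wcomp)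
  finally show ?thesis .
qed

theorem theorem1:
  fixes a b c :: complex
  shows "formal_deformation (\<lambda>n. bracket a b c n)
    \<and> (\<forall>k l :: int. \<forall>p q n :: nat. \<forall>f g. even k \<longrightarrow> even l \<longrightarrow>
          f \<in> Jhom k p \<longrightarrow> g \<in> Jhom l q \<longrightarrow>
          bracket a b c n f g \<in> Jhom (k + l + 2 * int n) (p + q))
    \<and> (\<forall>n f g. f \<in> Mstar \<longrightarrow> g \<in> Mstar \<longrightarrow>
          bracket a b c n f g \<in> Mstar \<and> bracket a b c n f g = SRC n f g)"
proof (intro conjI allI impI)
  show "formal_deformation (\<lambda>n. bracket a b c n)"
    using deform_lhs_eq_rhs[of a b c]
    by (simp add: formal_deformation_def bracket_0_eq_mult deform_lhs_def deform_rhs_def)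
next
  fix k l :: int and p q n :: nat and f g
  assume "f \<in> Jhom k p" "g \<in> Jhom l q"
  then show "bracket a b c n f g \<in> Jhom (k + l + 2 * int n) (p + q)"
    by (rule bracket_Jhom)
next
  fix n f g
  assume "f \<in> Mstar" "g \<in> Mstar"
  then show "bracket a b c n f g \<in> Mstar" and "bracket a b c n f g = SRC n f g"
    by (rule Mstar_bracket, rule bracket_eq_SRC)
qed

end
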